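(* Let $F$ be a forest each of whose components is rooted or double-rooted. Suppose that $d\ge 0$ of the components of $F$ are double-rooted and that the two roots of each such component are at distance at least $7$. Let $B$ be a complete graph on at least $v(F)+\Delta(F)$ vertices, all edges free. Then for any injective assignment of the roots of $F$ to vertices of $B$ fixed at the beginning, Waiter, playing the Waiter-Client game on $B$, can force a red copy $\bar F$ of $F$ within at most $e(F)+d$ rounds in such a way that (a) every root is mapped to its assigned vertex; (b) every colored edge has an endpoint in a non-leaf of $\bar F$; (c) every non-leaf of $\bar F$ is incident with at most $\Delta(F)$ blue edges whose other endpoint is in $V(B)\setminus V(\bar F)$.
   Context: Waiter-Client game on $B$: in each round Waiter offers two free edges of $B$, Client colors one red and the other becomes blue. A component of a forest with designated roots is rooted if it contains exactly one root and double-rooted if it contains exactly two roots. A leaf is a vertex of degree 1 that is not a root; leaves of $\bar F$ are images of leaves of $F$. *)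

theory Defs
  imports Main
begin

definition graph :: "'a set \<Rightarrow> 'a set set \<Rightarrow> bool" where
  "graph V E \<longleftrightarrow> finite V \<and> (\<forall>e\<in>E. e \<subseteq> V \<and> card e = 2)"

definition deg :: "'a set set \<Rightarrow> 'a \<Rightarrow> nat" where
  "deg E v = card {e\<in>E. v \<in> e}"

definition maxdeg :: "'a set \<Rightarrow> 'a set set \<Rightarrow> nat" where
  "maxdeg V E = Max (insert 0 (deg E ` V))"

text \<open>A walk given as a nonempty list of vertices; consecutive vertices are adjacent.
  Its length (number of edges) is length xs - 1.\<close>

definition walk :: "'a set set \<Rightarrow> 'a list \<Rightarrow> bool" where
  "walk E xs \<longleftrightarrow> xs \<noteq> [] \<and> (\<forall>i. Suc i < length xs \<longrightarrow> {xs ! i, xs ! Suc i} \<in> E)"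

definition connected :: "'a set \<Rightarrow> 'a set set \<Rightarrow> 'a \<Rightarrow> 'a \<Rightarrow> bool" where
  "connected V E u v \<longleftrightarrow> u \<in> V \<and> (\<exists>xs. walk E xs \<and> hd xs = u \<and> last xs = v)"

definition components :: "'a set \<Rightarrow> 'a set set \<Rightarrow> 'a set set" where
  "components V E = (\<lambda>v. {u. connected V E v u}) ` V"

definition dist_ge :: "'a set set \<Rightarrow> 'a \<Rightarrow> 'a \<Rightarrow> nat \<Rightarrow> bool" where
  "dist_ge E u v k \<longleftrightarrow> (\<forall>xs. walk E xs \<and> hd xs = u \<and> last xs = v \<longrightarrow> k \<le> length xs - 1)"

definition forest :: "'a set \<Rightarrow> 'a set set \<Rightarrow> bool" where
  "forest V E \<longleftrightarrow> graph V E \<and>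
     \<not> (\<exists>xs. walk E xs \<and> distinct xs \<and> 3 \<le> length xs \<and> {last xs, hd xs} \<in> E)"

definition leaves :: "'a set \<Rightarrow> 'a set set \<Rightarrow> 'a set \<Rightarrow> 'a set" where
  "leaves V E R = {v\<in>V. deg E v = 1 \<and> v \<notin> R}"

definition double_rooted_comps :: "'a set \<Rightarrow> 'a set set \<Rightarrow> 'a set \<Rightarrow> 'a set set" where
  "double_rooted_comps V E R = {C\<in>components V E. card (C \<inter> R) = 2}"

definition Kedges :: "'b set \<Rightarrow> 'b set set" where
  "Kedges W = {e. e \<subseteq> W \<and> card e = 2}"

text \<open>In each round Waiter offers two distinct free edges e, f; Client colours one
  of them red and the other one becomes blue.\<close>

fun waiter_forces :: "'b set \<Rightarrow> ('b set set \<Rightarrow> 'b set set \<Rightarrow> bool) \<Rightarrow> nat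
    \<Rightarrow> 'b set set \<Rightarrow> 'b set set \<Rightarrow> bool" where
  "waiter_forces W P 0 Red Blue = P Red Blue"
| "waiter_forces W P (Suc k) Red Blue =
     (P Red Blue \<or>
      (\<exists>e f. e \<in> Kedges W - (Red \<union> Blue) \<and> f \<in> Kedges W - (Red \<union> Blue) \<and> e \<noteq> f \<and>
         waiter_forces W P k (insert e Red) (insert f Blue) \<and>
         waiter_forces W P k (insert f Red) (insert e Blue)))"

definition good_copy :: "'a set \<Rightarrow> 'a set set \<Rightarrow> 'a set \<Rightarrow> 'b set \<Rightarrow> ('a \<Rightarrow> 'b)
    \<Rightarrow> 'b set set \<Rightarrow> 'b set set \<Rightarrow> bool" where
  "good_copy V E R W \<rho> Red Blue \<longleftrightarrow>
     (\<exists>\<phi>. inj_on \<phi> V \<and> \<phi> ` V \<subseteq> W \<and>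
        (\<forall>u v. {u, v} \<in> E \<longrightarrow> {\<phi> u, \<phi> v} \<in> Red) \<and>
        (\<forall>r\<in>R. \<phi> r = \<rho> r) \<and>
        (\<forall>e\<in>Red \<union> Blue. \<exists>x\<in>e. x \<in> \<phi> ` (V - leaves V E R)) \<and>
        (\<forall>x\<in>V - leaves V E R.
           card {y\<in>W - \<phi> ` V. {\<phi> x, y} \<in> Blue} \<le> maxdeg V E))"

end

theory Submission
  imports Defs
begin

text \<open>
  Give each non-root \<open>w\<close> of \<open>F\<close> a parent, a neighbour one step closer to the roots. The edges
  \<open>{w, parent w}\<close> form a spanning forest with exactly one root per tree, and each remaining
  cross edge joins the two trees of a double-rooted component. As the two roots are at distance
  at least 7, both ends of a cross edge have depth at least 3, and distinct cross edges lie in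
  distinct components.

  Waiter embeds the tree edges from the roots outwards, one round per edge: he offers two
  edges from the image of the parent to unused host vertices, and the red one fixes the image of
  the child. A cross edge \<open>{g, v}\<close> costs two extra rounds. Once \<open>g\<close> and all its children are
  embedded, two rounds at the image of \<open>g\<close> give two red edges to unused vertices \<open>y, y'\<close>, which
  are then reserved. When the grandparent of \<open>v\<close> is embedded, Waiter embeds \<open>parent v\<close> at some
  \<open>s\<close> as usual and then offers \<open>{s, y}\<close> and \<open>{s, y'}\<close>; whichever is red places \<open>v\<close> on a vertex
  already joined in red to the image of \<open>g\<close>. This takes \<open>e(F) + #cross edges \<le> e(F) + d\<close>
  rounds. Comparing, at every embedded vertex, the coloured edges to unused host vertices and the
  children still to be embedded with \<open>\<Delta>(F)\<close> shows that enough unused host vertices are always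
  available, and yields (c).
\<close>

lemma card_le_Suc_if_subset_insert: "finite B \<Longrightarrow> A \<subseteq> insert a B \<Longrightarrow> card A \<le> Suc (card B)"
  using card_mono[of "insert a B" A] by (simp add: card_insert_if split: if_splits)

lemma doubleton_in_Kedges: "a \<in> W \<Longrightarrow> b \<in> W \<Longrightarrow> a \<noteq> b \<Longrightarrow> {a, b} \<in> Kedges W"
  by (simp add: Kedges_def)

lemma exists_orientation:
  assumes "\<forall>e\<in>S. card e = 2"
  shows "\<exists>Q. bij_betw (\<lambda>(g, v). {g, v}) Q S"
proof -
  define h where "h e = (SOME p. e = {fst p, snd p})" for e :: "'a set"
  have h: "{fst (h e), snd (h e)} = e" if "e \<in> S" for e
  proof -
    have "card e = 2" using assms that by blast
    then obtain x y where "e = {x, y}" by (auto simp: card_2_iff)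
    then have "e = {fst (x, y), snd (x, y)}" by simp
    then have "e = {fst (h e), snd (h e)}" unfolding h_def by (rule someI)
    then show ?thesis by simp
  qed
  have "inj_on (\<lambda>(g, v). {g, v}) (h ` S)"
  proof (rule inj_onI)
    fix p p' assume p: "p \<in> h ` S" "p' \<in> h ` S"
      and eq: "(\<lambda>(g, v). {g, v}) p = (\<lambda>(g, v). {g, v}) p'"
    from p obtain e e' where e: "e \<in> S" "e' \<in> S" and pe: "p = h e" "p' = h e'" by (elim imageE)
    have "e = e'" using eq h[OF e(1)] h[OF e(2)] unfolding pe by (simp add: case_prod_unfold)
    then show "p = p'" using pe by simp
  qed
  moreover have "(\<lambda>(g, v). {g, v}) ` h ` S = S"
    using h by (simp add: case_prod_unfold image_image)
  ultimately show ?thesis unfolding bij_betw_def by blast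
qed

section \<open>Walks\<close>

lemma walk_Nil [simp]: "\<not> walk E []"
  by (simp add: walk_def)

lemma walk_singleton [simp]: "walk E [x]"
  by (simp add: walk_def)

lemma walk_Cons_Cons [simp]: "walk E (x # y # xs) \<longleftrightarrow> {x, y} \<in> E \<and> walk E (y # xs)"
  unfolding walk_def by (auto simp: less_Suc_eq_0_disj)

lemma walk_mono: "walk E xs \<Longrightarrow> E \<subseteq> E' \<Longrightarrow> walk E' xs"
  by (auto simp: walk_def)

lemma walk_append_iff:
  "xs \<noteq> [] \<Longrightarrow> ys \<noteq> [] \<Longrightarrow>
     walk E (xs @ ys) \<longleftrightarrow> walk E xs \<and> {last xs, hd ys} \<in> E \<and> walk E ys"
proof (induction xs rule: induct_list012)
  case (2 x)
  then show ?case by (cases ys) auto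
qed auto

lemma walk_suffix: "walk E (xs @ ys) \<Longrightarrow> ys \<noteq> [] \<Longrightarrow> walk E ys"
  by (cases "xs = []") (auto simp: walk_append_iff)

lemma walk_rev: "walk E xs \<Longrightarrow> walk E (rev xs)"
proof (induction xs rule: induct_list012)
  case (3 x y zs)
  then have "walk E (rev (y # zs) @ [x])"
    by (subst walk_append_iff) (auto simp: insert_commute)
  then show ?case by simp
qed auto

lemma walk_distinct:
  "walk E xs \<Longrightarrow> \<exists>ys. walk E ys \<and> distinct ys \<and> hd ys = hd xs \<and> last ys = last xs"
proof (induction xs rule: induct_list012)
  case (3 x y zs)
  then obtain ys where ys: "walk E ys" "distinct ys" "hd ys = y" "last ys = last (y # zs)"
    by auto
  show ?case
  proof (cases "x \<in> set ys")
    case True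
    then obtain ys1 ys2 where "ys = ys1 @ x # ys2" by (meson split_list)
    then show ?thesis using ys walk_suffix[of E ys1 "x # ys2"]
      by (intro exI[of _ "x # ys2"]) auto
  next
    case False
    then show ?thesis using ys 3 by (intro exI[of _ "x # ys"]) (auto simp: neq_Nil_conv)
  qed
next
  case (2 x)
  show ?case by (intro exI[of _ "[x]"]) simp
qed simp

definition reachable :: "'a set set \<Rightarrow> 'a \<Rightarrow> 'a \<Rightarrow> bool" where
  "reachable E u v \<longleftrightarrow> (\<exists>xs. walk E xs \<and> hd xs = u \<and> last xs = v)"

lemma reachable_refl: "reachable E u u"
  unfolding reachable_def by (intro exI[of _ "[u]"]) simp

lemma reachable_edge: "{u, v} \<in> E \<Longrightarrow> reachable E u v"
  unfolding reachable_def by (intro exI[of _ "[u, v]"]) simp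

lemma reachable_trans: "reachable E u v \<Longrightarrow> reachable E v w \<Longrightarrow> reachable E u w"
proof -
  assume "reachable E u v" "reachable E v w"
  then obtain xs ys where xs: "walk E xs" "hd xs = u" "last xs = v"
    and ys: "walk E ys" "hd ys = v" "last ys = w"
    unfolding reachable_def by blast
  have "xs \<noteq> []" using xs by auto
  show ?thesis
  proof (cases "tl ys")
    case Nil
    then have "w = v" using ys by (cases ys) auto
    then show ?thesis using xs unfolding reachable_def by auto
  next
    case (Cons z zs)
    then have ys_eq: "ys = v # z # zs" using ys by (cases ys) auto
    have "walk E (xs @ z # zs)"
      using xs ys ys_eq \<open>xs \<noteq> []\<close> by (subst walk_append_iff) auto
    then show ?thesis using xs ys ys_eq \<open>xs \<noteq> []\<close> unfolding reachable_def
      by (intro exI[of _ "xs @ z # zs"]) auto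
  qed
qed

lemma reachable_sym: "reachable E u v \<Longrightarrow> reachable E v u"
proof -
  assume "reachable E u v"
  then obtain xs where xs: "walk E xs" "hd xs = u" "last xs = v" unfolding reachable_def by blast
  then have "xs \<noteq> []" by auto
  then show ?thesis unfolding reachable_def using xs walk_rev
    by (intro exI[of _ "rev xs"]) (simp add: hd_rev last_rev)
qed

lemma reachable_mono: "reachable E u v \<Longrightarrow> E \<subseteq> E' \<Longrightarrow> reachable E' u v"
  unfolding reachable_def using walk_mono by blast

lemma reachable_distinct_walk:
  "reachable E u v \<Longrightarrow> \<exists>xs. walk E xs \<and> distinct xs \<and> hd xs = u \<and> last xs = v"
proof -
  assume "reachable E u v"
  then obtain xs where "walk E xs" "hd xs = u" "last xs = v" unfolding reachable_def by blast
  then show ?thesis using walk_distinct[of E xs] by auto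
qed

lemma forest_no_detour:
  assumes "forest V E" and "{a, b} \<in> E"
  shows "\<not> reachable (E - {{a, b}}) a b"
proof
  assume "reachable (E - {{a, b}}) a b"
  then obtain xs where xs: "walk (E - {{a, b}}) xs" "distinct xs" "hd xs = a" "last xs = b"
    using reachable_distinct_walk by metis
  have "card {a, b} = 2" using assms unfolding forest_def graph_def by blast
  then have "a \<noteq> b" by (cases "a = b") auto
  then obtain c ys where xs_eq: "xs = a # c # ys"
    using xs by (cases xs rule: remdups_adj.cases) simp_all
  show False
  proof (cases ys)
    case Nil
    then show False using xs xs_eq by simp
  next
    case Cons
    have "walk E xs" using walk_mono[OF xs(1)] by blast
    moreover have "3 \<le> length xs" using xs_eq Cons by simp
    moreover have "{last xs, hd xs} \<in> E" using xs assms(2) by (simp add: insert_commute)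
    ultimately show False using assms(1) xs(2) unfolding forest_def by blast
  qed
qed

section \<open>Parents and cross edges of a rooted forest\<close>

locale rooted_forest =
  fixes V :: "'a set" and E :: "'a set set" and R :: "'a set"
  assumes forest: "forest V E"
    and roots_subset: "R \<subseteq> V"
    and component_meets_roots: "\<forall>C\<in>components V E. C \<inter> R \<noteq> {}"
begin

lemma finite_V: "finite V"
  using forest unfolding forest_def graph_def by blast

lemma edge_subset: "e \<in> E \<Longrightarrow> e \<subseteq> V \<and> card e = 2"
  using forest unfolding forest_def graph_def by blast

lemma edge_endpoints: "{a, b} \<in> E \<Longrightarrow> a \<in> V \<and> b \<in> V \<and> a \<noteq> b"
  using edge_subset[of "{a, b}"] by (cases "a = b") auto

lemma finite_E: "finite E"
proof -
  have "E \<subseteq> Pow V" using edge_subset by blast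
  then show ?thesis using finite_V finite_subset by blast
qed

lemma reachable_some_root: "w \<in> V \<Longrightarrow> \<exists>r\<in>R. reachable E w r"
proof -
  assume w: "w \<in> V"
  have "{u. connected V E w u} \<in> components V E" using w unfolding components_def by blast
  then obtain r where "r \<in> R" "connected V E w r" using component_meets_roots by blast
  then show ?thesis unfolding connected_def reachable_def by blast
qed

definition depth :: "'a \<Rightarrow> nat" where
  "depth w = (LEAST n. \<exists>xs. walk E xs \<and> hd xs = w \<and> last xs \<in> R \<and> length xs = Suc n)"

lemma depth_witness:
  assumes "w \<in> V"
  shows "\<exists>xs. walk E xs \<and> hd xs = w \<and> last xs \<in> R \<and> length xs = Suc (depth w)"
proof -
  obtain xs where xs: "walk E xs" "hd xs = w" "last xs \<in> R"
    using reachable_some_root[OF assms] unfolding reachable_def by blast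
  then have "length xs = Suc (length xs - 1)" by (cases xs) auto
  then have "\<exists>n xs. walk E xs \<and> hd xs = w \<and> last xs \<in> R \<and> length xs = Suc n" using xs by blast
  then show ?thesis unfolding depth_def by (rule LeastI_ex)
qed

lemma depth_less: "walk E xs \<Longrightarrow> hd xs = w \<Longrightarrow> last xs \<in> R \<Longrightarrow> depth w < length xs"
proof -
  assume xs: "walk E xs" "hd xs = w" "last xs \<in> R"
  then have "length xs = Suc (length xs - 1)" by (cases xs) auto
  then have "depth w \<le> length xs - 1" unfolding depth_def using xs by (intro Least_le) auto
  then show ?thesis using \<open>length xs = Suc (length xs - 1)\<close> by linarith
qed

lemma depth_eq_0_iff: "w \<in> V \<Longrightarrow> depth w = 0 \<longleftrightarrow> w \<in> R"
proof
  assume "w \<in> V" "depth w = 0"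
  then obtain xs where "walk E xs" "hd xs = w" "last xs \<in> R" "length xs = 1"
    using depth_witness by fastforce
  then show "w \<in> R" by (cases xs) auto
next
  assume "w \<in> R"
  then show "depth w = 0" using depth_less[of "[w]" w] by simp
qed

lemma depth_edge: "{a, b} \<in> E \<Longrightarrow> depth a \<le> Suc (depth b)"
proof -
  assume e: "{a, b} \<in> E"
  obtain xs where xs: "walk E xs" "hd xs = b" "last xs \<in> R" "length xs = Suc (depth b)"
    using depth_witness edge_endpoints[OF e] by blast
  then obtain ys where "xs = b # ys" by (cases xs) auto
  then have "walk E (a # xs)" using xs e by (cases ys) auto
  then have "depth a < length (a # xs)"
    by (rule depth_less) (use xs \<open>xs = b # ys\<close> in auto)
  then show ?thesis using xs by simp
qed

definition parent :: "'a \<Rightarrow> 'a" where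
  "parent w = (SOME x. {w, x} \<in> E \<and> depth w = Suc (depth x))"

lemma parent_exists:
  assumes "w \<in> V - R"
  shows "\<exists>x. {w, x} \<in> E \<and> depth w = Suc (depth x)"
proof -
  obtain xs where xs: "walk E xs" "hd xs = w" "last xs \<in> R" "length xs = Suc (depth w)"
    using depth_witness assms by blast
  have "depth w \<noteq> 0" using depth_eq_0_iff assms by blast
  then obtain x ys where xs_eq: "xs = w # x # ys"
    using xs by (cases xs rule: remdups_adj.cases) auto
  then have e: "{w, x} \<in> E" using xs by auto
  have "depth x < length (x # ys)"
    by (rule depth_less) (use xs xs_eq in auto)
  then have "depth w = Suc (depth x)" using depth_edge[OF e] xs xs_eq by simp
  then show ?thesis using e by blast
qed

lemma parent_edge: "w \<in> V - R \<Longrightarrow> {w, parent w} \<in> E"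
  and depth_parent: "w \<in> V - R \<Longrightarrow> depth w = Suc (depth (parent w))"
  using someI_ex[OF parent_exists] unfolding parent_def by blast+

lemma parent_in_V: "w \<in> V - R \<Longrightarrow> parent w \<in> V"
  using parent_edge edge_endpoints by blast

lemma parent_neq: "w \<in> V - R \<Longrightarrow> parent w \<noteq> w"
  using depth_parent by force

lemma parent_parent_neq: "w \<in> V - R \<Longrightarrow> parent w \<notin> R \<Longrightarrow> parent (parent w) \<noteq> w"
proof
  assume w: "w \<in> V - R" "parent w \<notin> R" "parent (parent w) = w"
  have "depth w = Suc (depth (parent w))" using depth_parent w by blast
  moreover have "depth (parent w) = Suc (depth (parent (parent w)))"
    using depth_parent parent_in_V w by blast
  ultimately show False using w by simp
qed

definition root_of :: "'a \<Rightarrow> 'a" where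
  "root_of w = (parent ^^ depth w) w"

lemma root_of_root: "r \<in> R \<Longrightarrow> root_of r = r"
proof -
  assume "r \<in> R"
  then have "depth r = 0" using depth_eq_0_iff roots_subset by blast
  then show ?thesis by (simp add: root_of_def)
qed

lemma root_of_parent: "w \<in> V - R \<Longrightarrow> root_of (parent w) = root_of w"
proof -
  assume "w \<in> V - R"
  then have "depth w = Suc (depth (parent w))" by (rule depth_parent)
  then show ?thesis by (simp only: root_of_def funpow_Suc_right comp_apply)
qed

definition tree_edges :: "'a set set" where
  "tree_edges = (\<lambda>w. {w, parent w}) ` (V - R)"

definition cross_edges :: "'a set set" where
  "cross_edges = E - tree_edges"

lemma tree_edges_subset: "tree_edges \<subseteq> E"
  unfolding tree_edges_def using parent_edge by blast

lemma path_to_root: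
  "w \<in> V \<Longrightarrow> \<exists>xs. walk tree_edges xs \<and> hd xs = w \<and> last xs = root_of w
     \<and> root_of w \<in> R \<and> length xs = Suc (depth w)"
proof (induction "depth w" arbitrary: w rule: less_induct)
  case less
  show ?case
  proof (cases "w \<in> R")
    case True
    then show ?thesis using root_of_root depth_eq_0_iff less.prems
      by (intro exI[of _ "[w]"]) auto
  next
    case False
    then have w: "w \<in> V - R" using less.prems by blast
    then obtain xs where xs: "walk tree_edges xs" "hd xs = parent w" "last xs = root_of w"
      "root_of w \<in> R" "length xs = Suc (depth (parent w))"
      using less.hyps[of "parent w"] depth_parent parent_in_V root_of_parent by force
    have "{w, parent w} \<in> tree_edges" using w unfolding tree_edges_def by blast
    then have "walk tree_edges (w # xs)" using xs by (cases xs) auto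
    then show ?thesis using xs depth_parent[OF w] by (intro exI[of _ "w # xs"]) auto
  qed
qed

lemma root_of_in_R: "w \<in> V \<Longrightarrow> root_of w \<in> R"
  using path_to_root by blast

lemma reachable_root_of: "w \<in> V \<Longrightarrow> reachable tree_edges w (root_of w)"
  using path_to_root unfolding reachable_def by blast

lemma frontier_vertex:
  assumes "R \<subseteq> U" "w0 \<in> V - U"
  shows "\<exists>w\<in>V - U. parent w \<in> U \<and> root_of w = root_of w0"
  using assms(2)
proof (induction "depth w0" arbitrary: w0 rule: less_induct)
  case less
  then have w0: "w0 \<in> V - R" using assms(1) by blast
  show ?case
  proof (cases "parent w0 \<in> U")
    case True
    then show ?thesis using less.prems by blast
  next
    case False
    have "depth (parent w0) < depth w0" using depth_parent[OF w0] by simp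
    then obtain w where "w \<in> V - U" "parent w \<in> U" "root_of w = root_of (parent w0)"
      using less.hyps[of "parent w0"] False parent_in_V[OF w0] by blast
    then show ?thesis using root_of_parent[OF w0] by auto
  qed
qed

lemma inj_on_tree_edge: "inj_on (\<lambda>w. {w, parent w}) (V - R)"
proof (rule inj_onI)
  fix u u' assume u: "u \<in> V - R" "u' \<in> V - R" and eq: "{u, parent u} = {u', parent u'}"
  show "u = u'"
  proof (rule ccontr)
    assume "u \<noteq> u'"
    then have "u = parent u'" "u' = parent u" using eq by (auto simp: doubleton_eq_iff)
    then show False using depth_parent[OF u(1)] depth_parent[OF u(2)] by simp
  qed
qed

lemma card_E: "card E = card (V - R) + card cross_edges"
proof -
  have "card tree_edges = card (V - R)"
    unfolding tree_edges_def by (rule card_image[OF inj_on_tree_edge])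
  moreover have "card E = card tree_edges + card cross_edges"
    unfolding cross_edges_def using finite_E tree_edges_subset
    by (metis card_Diff_subset card_mono finite_subset le_add_diff_inverse)
  ultimately show ?thesis by simp
qed

lemma card_tree_edges_at:
  assumes "x \<in> V"
  shows "card {w \<in> V - R. parent w = x} + (if x \<in> R then 0 else 1) \<le> card {e \<in> tree_edges. x \<in> e}"
proof -
  let ?S = "{w \<in> V - R. parent w = x} \<union> (if x \<in> R then {} else {x})"
  have "x \<notin> {w \<in> V - R. parent w = x}" using parent_neq by blast
  then have "card {w \<in> V - R. parent w = x} + (if x \<in> R then 0 else 1) = card ?S"
    using finite_V by auto
  also have "\<dots> \<le> card {e \<in> tree_edges. x \<in> e}"
  proof (rule card_inj_on_le)
    show "inj_on (\<lambda>w. {w, parent w}) ?S"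
      using inj_on_tree_edge by (rule inj_on_subset) (use assms in auto)
    show "(\<lambda>w. {w, parent w}) ` ?S \<subseteq> {e \<in> tree_edges. x \<in> e}"
      unfolding tree_edges_def using assms by auto
    show "finite {e \<in> tree_edges. x \<in> e}"
      using finite_E tree_edges_subset by (auto intro: finite_subset)
  qed
  finally show ?thesis .
qed

lemma degree_bound:
  assumes "x \<in> V"
  shows "card {w \<in> V - R. parent w = x} + (if x \<in> R then 0 else 1)
           + (if x \<in> \<Union>cross_edges then 1 else 0) \<le> maxdeg V E"
proof -
  have fin: "finite {e \<in> cross_edges. x \<in> e}" "finite {e \<in> tree_edges. x \<in> e}"
    using finite_E tree_edges_subset unfolding cross_edges_def by (auto intro: finite_subset)
  have "(if x \<in> \<Union>cross_edges then 1 else 0) \<le> card {e \<in> cross_edges. x \<in> e}"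
    using fin(1) by (auto simp: Suc_le_eq card_gt_0_iff)
  then have "card {w \<in> V - R. parent w = x} + (if x \<in> R then 0 else 1)
           + (if x \<in> \<Union>cross_edges then 1 else 0)
      \<le> card {e \<in> tree_edges. x \<in> e} + card {e \<in> cross_edges. x \<in> e}"
    using card_tree_edges_at[OF assms] by linarith
  also have "\<dots> = deg E x"
  proof -
    have "{e \<in> E. x \<in> e} = {e \<in> tree_edges. x \<in> e} \<union> {e \<in> cross_edges. x \<in> e}"
      using tree_edges_subset unfolding cross_edges_def by blast
    then show ?thesis
      unfolding deg_def using fin by (simp add: card_Un_disjoint cross_edges_def Int_def)
  qed
  also have "\<dots> \<le> maxdeg V E"
    unfolding maxdeg_def using finite_V assms by (intro Max_ge) auto
  finally show ?thesis .
qed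

lemma two_edges_not_leaf:
  assumes "e1 \<in> E" "e2 \<in> E" "e1 \<noteq> e2" "x \<in> e1" "x \<in> e2"
  shows "x \<notin> leaves V E R"
proof -
  have "card {e1, e2} \<le> deg E x"
    unfolding deg_def using finite_E assms by (intro card_mono) auto
  then show ?thesis using assms(3) unfolding leaves_def by auto
qed

lemma parent_not_leaf: "w \<in> V - R \<Longrightarrow> parent w \<notin> leaves V E R"
proof (cases "parent w \<in> R")
  case False
  assume w: "w \<in> V - R"
  have "{w, parent w} \<noteq> {parent w, parent (parent w)}"
    using parent_neq[OF w] parent_parent_neq[OF w False] by (auto simp: doubleton_eq_iff)
  then show ?thesis
    using two_edges_not_leaf parent_edge[OF w] parent_edge[of "parent w"] parent_in_V[OF w] False
    by blast
qed (simp add: leaves_def)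

lemma cross_endpoint_not_leaf:
  assumes "e \<in> cross_edges" "x \<in> e" "x \<notin> R"
  shows "x \<notin> leaves V E R"
proof -
  have x: "x \<in> V - R" using assms edge_subset unfolding cross_edges_def by blast
  then have "{x, parent x} \<in> tree_edges" unfolding tree_edges_def by blast
  then show ?thesis
    using two_edges_not_leaf[of "{x, parent x}" e] assms tree_edges_subset
    unfolding cross_edges_def by blast
qed

lemma cross_edge_endpoints: "{a, b} \<in> cross_edges \<Longrightarrow> a \<in> V \<and> b \<in> V \<and> a \<noteq> b"
  using edge_endpoints unfolding cross_edges_def by blast

lemma reachable_avoiding_cross_edge:
  assumes "e \<in> cross_edges" "u \<in> V" "w \<in> V" "root_of u = root_of w"
  shows "reachable (E - {e}) u w"
proof -
  have sub: "tree_edges \<subseteq> E - {e}" using assms(1) tree_edges_subset unfolding cross_edges_def by blast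
  have "reachable (E - {e}) u (root_of w)"
    using reachable_mono[OF reachable_root_of[OF assms(2)] sub] assms(4) by simp
  moreover have "reachable (E - {e}) (root_of w) w"
    using reachable_sym[OF reachable_mono[OF reachable_root_of[OF assms(3)] sub]] .
  ultimately show ?thesis by (rule reachable_trans)
qed

lemma cross_edge_roots_neq: "{a, b} \<in> cross_edges \<Longrightarrow> root_of a \<noteq> root_of b"
proof
  assume e: "{a, b} \<in> cross_edges" and "root_of a = root_of b"
  then have "reachable (E - {{a, b}}) a b"
    using reachable_avoiding_cross_edge cross_edge_endpoints by blast
  then show False using forest_no_detour[OF forest] e unfolding cross_edges_def by blast
qed

lemma cross_edge_eqI:
  assumes e: "{a, b} \<in> cross_edges" "{a', b'} \<in> cross_edges"
    and roots: "root_of a = root_of a'" "root_of b = root_of b'"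
  shows "{a, b} = {a', b'}"
proof (rule ccontr)
  assume ne: "{a, b} \<noteq> {a', b'}"
  let ?E = "E - {{a, b}}"
  have V: "a \<in> V" "b \<in> V" "a' \<in> V" "b' \<in> V" using e cross_edge_endpoints by blast+
  have "reachable ?E a a'" "reachable ?E b' b"
    using reachable_avoiding_cross_edge[OF e(1)] V roots by simp_all
  moreover have "reachable ?E a' b'"
    using e ne unfolding cross_edges_def by (intro reachable_edge) blast
  ultimately have "reachable ?E a b" by (blast intro: reachable_trans)
  then show False using forest_no_detour[OF forest] e unfolding cross_edges_def by blast
qed

end

section \<open>Cross edges when double roots are far apart\<close>

locale far_rooted_forest = rooted_forest +
  assumes at_most_two_roots: "\<forall>C\<in>components V E. card (C \<inter> R) \<le> 2"
    and double_roots_far: "\<forall>C\<in>double_rooted_comps V E R. \<forall>r1\<in>C \<inter> R. \<forall>r2\<in>C \<inter> R.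
           r1 \<noteq> r2 \<longrightarrow> dist_ge E r1 r2 7"
begin

definition component_of :: "'a \<Rightarrow> 'a set" where
  "component_of r = {u. connected V E r u}"

lemma mem_component_of: "u \<in> component_of r \<longleftrightarrow> r \<in> V \<and> reachable E r u"
  unfolding component_of_def connected_def reachable_def by blast

lemma component_of_eq:
  assumes "u \<in> component_of r" "u \<in> V"
  shows "component_of u = component_of r"
proof -
  have r: "r \<in> V" "reachable E r u" using assms(1) unfolding mem_component_of by blast+
  have "reachable E u w \<longleftrightarrow> reachable E r w" for w
    using reachable_trans[OF r(2)] reachable_trans[OF reachable_sym[OF r(2)]] by blast
  then show ?thesis using r assms(2) unfolding set_eq_iff mem_component_of by blast
qed

lemma reachable_root_pair:
  assumes e: "{a, b} \<in> cross_edges"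
  shows "reachable E (root_of a) (root_of b)"
proof -
  have V: "a \<in> V" "b \<in> V" using e cross_edge_endpoints by blast+
  have "reachable E (root_of a) a"
    using reachable_sym[OF reachable_mono[OF reachable_root_of[OF V(1)] tree_edges_subset]] .
  moreover have "reachable E a b" using e unfolding cross_edges_def by (simp add: reachable_edge)
  moreover have "reachable E b (root_of b)"
    using reachable_mono[OF reachable_root_of[OF V(2)] tree_edges_subset] .
  ultimately show ?thesis using reachable_trans by metis
qed

lemma cross_edge_root_pair:
  assumes e: "{a, b} \<in> cross_edges"
  shows "component_of (root_of a) \<inter> R = {root_of a, root_of b}"
    and "component_of (root_of a) \<in> double_rooted_comps V E R"
proof -
  have R: "root_of a \<in> R" "root_of b \<in> R"
    using e cross_edge_endpoints root_of_in_R by blast+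
  have sub: "{root_of a, root_of b} \<subseteq> component_of (root_of a) \<inter> R"
    using R roots_subset reachable_refl reachable_root_pair[OF e] by (auto simp: mem_component_of)
  have comp: "component_of (root_of a) \<in> components V E"
    using R roots_subset unfolding component_of_def components_def by blast
  have two: "card {root_of a, root_of b} = 2" using cross_edge_roots_neq[OF e] by simp
  have fin: "finite (component_of (root_of a) \<inter> R)"
    using finite_V roots_subset by (simp add: finite_subset)
  have "card (component_of (root_of a) \<inter> R) \<le> card {root_of a, root_of b}"
    using at_most_two_roots comp two by simp
  then show eq: "component_of (root_of a) \<inter> R = {root_of a, root_of b}"
    using card_seteq[OF fin sub] by simp
  show "component_of (root_of a) \<in> double_rooted_comps V E R"
    unfolding double_rooted_comps_def using comp eq two by simp
qed

lemma cross_edge_eqI_shared_root: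
  assumes e: "{a, b} \<in> cross_edges" "{a', b'} \<in> cross_edges"
    and shared: "{root_of a, root_of b} \<inter> {root_of a', root_of b'} \<noteq> {}"
  shows "{a, b} = {a', b'}"
proof -
  obtain r where r: "r \<in> {root_of a, root_of b}" "r \<in> {root_of a', root_of b'}"
    using shared by blast
  have "r \<in> V" using r(1) e(1) cross_edge_endpoints root_of_in_R roots_subset by blast
  then have "component_of (root_of a) = component_of r" "component_of (root_of a') = component_of r"
    using r cross_edge_root_pair(1)[OF e(1)] cross_edge_root_pair(1)[OF e(2)] component_of_eq
    by (metis Int_iff)+
  then have "{root_of a, root_of b} = {root_of a', root_of b'}"
    using cross_edge_root_pair(1)[OF e(1)] cross_edge_root_pair(1)[OF e(2)] by simp
  then consider "root_of a = root_of a'" "root_of b = root_of b'"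
    | "root_of a = root_of b'" "root_of b = root_of a'"
    by (auto simp: doubleton_eq_iff)
  then show ?thesis
  proof cases
    case 1
    then show ?thesis using cross_edge_eqI[OF e] by blast
  next
    case 2
    have "{b', a'} \<in> cross_edges" using e(2) by (simp add: insert_commute)
    then have "{a, b} = {b', a'}" using cross_edge_eqI[OF e(1) _ 2] by blast
    then show ?thesis by (simp add: insert_commute)
  qed
qed

lemma cross_edge_depth_sum:
  assumes e: "{a, b} \<in> cross_edges"
  shows "6 \<le> depth a + depth b"
proof -
  have V: "a \<in> V" "b \<in> V" using e cross_edge_endpoints by blast+
  obtain xs where xs: "walk tree_edges xs" "hd xs = a" "last xs = root_of a"
    "length xs = Suc (depth a)"
    using path_to_root[OF V(1)] by blast
  obtain ys where ys: "walk tree_edges ys" "hd ys = b" "last ys = root_of b"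
    "length ys = Suc (depth b)"
    using path_to_root[OF V(2)] by blast
  have ne: "rev xs \<noteq> []" "ys \<noteq> []" using xs(4) ys(4) by auto
  have "{last (rev xs), hd ys} \<in> E"
    using e xs(2) ys(2) ne unfolding cross_edges_def by (simp add: last_rev)
  then have walk: "walk E (rev xs @ ys)"
    using walk_mono[OF walk_rev[OF xs(1)] tree_edges_subset] walk_mono[OF ys(1) tree_edges_subset]
    by (simp add: walk_append_iff[OF ne])
  have ends: "hd (rev xs @ ys) = root_of a" "last (rev xs @ ys) = root_of b"
    using xs(3) ys(3) ne by (simp_all add: hd_rev)
  have "root_of a \<in> component_of (root_of a) \<inter> R" "root_of b \<in> component_of (root_of a) \<inter> R"
    using cross_edge_root_pair(1)[OF e] by blast+
  then have "dist_ge E (root_of a) (root_of b) 7"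
    using double_roots_far cross_edge_root_pair(2)[OF e] cross_edge_roots_neq[OF e] by blast
  then have "7 \<le> length (rev xs @ ys) - 1"
    using walk ends unfolding dist_ge_def by blast
  then show ?thesis using xs(4) ys(4) by simp
qed

lemma cross_edge_depth:
  assumes e: "{a, b} \<in> cross_edges"
  shows "3 \<le> depth a"
proof -
  have "{b, a} \<in> E" using e unfolding cross_edges_def by (simp add: insert_commute)
  then have "depth b \<le> Suc (depth a)" by (rule depth_edge)
  then show ?thesis using cross_edge_depth_sum[OF e] by linarith
qed

lemma card_cross_edges_le: "card cross_edges \<le> card (double_rooted_comps V E R)"
proof -
  have pair: "\<exists>a b. e = {a, b}" if "e \<in> cross_edges" for e
  proof -
    have "card e = 2" using that edge_subset unfolding cross_edges_def by blast
    then obtain x y where "e = {x, y}" unfolding card_2_iff by blast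
    then show ?thesis by blast
  qed
  have "card cross_edges \<le> card ((\<lambda>C. C \<inter> R) ` double_rooted_comps V E R)"
  proof (rule card_inj_on_le[of "\<lambda>e. root_of ` e"])
    show "inj_on (\<lambda>e. root_of ` e) cross_edges"
    proof (rule inj_onI)
      fix e e' assume e: "e \<in> cross_edges" "e' \<in> cross_edges" and eq: "root_of ` e = root_of ` e'"
      obtain a b where ab: "e = {a, b}" using pair[OF e(1)] by (elim exE)
      obtain a' b' where ab': "e' = {a', b'}" using pair[OF e(2)] by (elim exE)
      have "{root_of a, root_of b} \<inter> {root_of a', root_of b'} \<noteq> {}"
        using eq unfolding ab ab' by auto
      then show "e = e'"
        using cross_edge_eqI_shared_root[of a b a' b'] e unfolding ab ab' by blast
    qed
    show "(\<lambda>e. root_of ` e) ` cross_edges \<subseteq> (\<lambda>C. C \<inter> R) ` double_rooted_comps V E R"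
    proof
      fix S assume "S \<in> (\<lambda>e. root_of ` e) ` cross_edges"
      then obtain e where e: "e \<in> cross_edges" "S = root_of ` e" by (elim imageE)
      obtain a b where ab: "e = {a, b}" using pair[OF e(1)] by (elim exE)
      have "S = component_of (root_of a) \<inter> R"
        using cross_edge_root_pair(1) e unfolding ab by simp
      then show "S \<in> (\<lambda>C. C \<inter> R) ` double_rooted_comps V E R"
        using cross_edge_root_pair(2) e unfolding ab by (intro rev_image_eqI) simp_all
    qed
    show "finite ((\<lambda>C. C \<inter> R) ` double_rooted_comps V E R)"
      using finite_V unfolding double_rooted_comps_def components_def by simp
  qed
  also have "\<dots> \<le> card (double_rooted_comps V E R)"
    using finite_V unfolding double_rooted_comps_def components_def by (simp add: card_image_le)
  finally show ?thesis .
qed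

end

section \<open>The Waiter-Client game\<close>

lemma waiter_forces_mono:
  "waiter_forces W P k Red Blue \<Longrightarrow> k \<le> k' \<Longrightarrow> waiter_forces W P k' Red Blue"
proof (induction k arbitrary: k' Red Blue)
  case 0
  then show ?case by (cases k') auto
next
  case (Suc k)
  then obtain k'' where k': "k' = Suc k''" "k \<le> k''" by (cases k') auto
  have "\<And>Red Blue. waiter_forces W P k Red Blue \<Longrightarrow> waiter_forces W P k'' Red Blue"
    using Suc.IH k'(2) by blast
  with Suc.prems(1) show ?case unfolding k'(1) waiter_forces.simps by blast
qed

lemma waiter_forces_done: "P Red Blue \<Longrightarrow> waiter_forces W P k Red Blue"
  by (cases k) simp_all

lemma waiter_forces_offer:
  assumes "e \<in> Kedges W - (Red \<union> Blue)" "f \<in> Kedges W - (Red \<union> Blue)" "e \<noteq> f"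
    and "waiter_forces W P k (insert e Red) (insert f Blue)"
    and "waiter_forces W P k (insert f Red) (insert e Blue)"
  shows "waiter_forces W P (Suc k) Red Blue"
  using assms by auto

lemma waiter_forces_offer_star:
  assumes free: "2 \<le> card {s \<in> F. {a, s} \<notin> Red \<union> Blue}"
    and F: "F \<subseteq> W" "a \<in> W" "a \<notin> F"
    and next_round: "\<And>s s'. s \<in> F \<Longrightarrow> s' \<in> F \<Longrightarrow> s \<noteq> s' \<Longrightarrow>
       {a, s} \<notin> Red \<union> Blue \<Longrightarrow> {a, s'} \<notin> Red \<union> Blue \<Longrightarrow>
       waiter_forces W P k (insert {a, s} Red) (insert {a, s'} Blue)"
  shows "waiter_forces W P (Suc k) Red Blue"
proof -
  let ?A = "{s \<in> F. {a, s} \<notin> Red \<union> Blue}"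
  have "card ?A \<noteq> 0" using free by linarith
  then have "finite ?A" "?A \<noteq> {}" unfolding card_eq_0_iff by blast+
  then obtain s1 where s1: "s1 \<in> ?A" by blast
  have "1 \<le> card (?A - {s1})" using free s1 \<open>finite ?A\<close> by simp
  then have "?A - {s1} \<noteq> {}" by (metis card.empty not_one_le_zero)
  then obtain s2 where s2: "s2 \<in> ?A - {s1}" by blast
  have "a \<noteq> s1" "a \<noteq> s2" using s1 s2 F(3) by auto
  then have edges: "{a, s1} \<in> Kedges W" "{a, s2} \<in> Kedges W" "{a, s1} \<noteq> {a, s2}"
    using s1 s2 F by (auto simp: doubleton_in_Kedges doubleton_eq_iff)
  show ?thesis
    by (rule waiter_forces_offer[of "{a, s1}" W Red Blue "{a, s2}"])
      (use edges s1 s2 next_round in auto)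
qed

section \<open>Waiter's strategy\<close>

text \<open>
  \<open>Q\<close> orients each cross edge as a pair \<open>(g, v)\<close>: the gadget is built at \<open>g\<close>, and \<open>v\<close> together
  with its parent is embedded last by the closing move.
\<close>

locale waiter_strategy = far_rooted_forest V E R
  for V :: "'a set" and E :: "'a set set" and R :: "'a set" +
  fixes W :: "'b set" and \<rho>0 :: "'a \<Rightarrow> 'b" and Q :: "('a \<times> 'a) set"
  assumes finite_W: "finite W"
    and card_W: "card V + maxdeg V E \<le> card W"
    and inj_roots: "inj_on \<rho>0 R"
    and roots_to_W: "\<rho>0 ` R \<subseteq> W"
    and orientation: "bij_betw (\<lambda>(g, v). {g, v}) Q cross_edges"
begin

lemma finite_Q: "finite Q"
  using bij_betw_finite[OF orientation] finite_E unfolding cross_edges_def by simp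

lemma pair_cross_edge: "p \<in> Q \<Longrightarrow> {fst p, snd p} \<in> cross_edges"
  using orientation unfolding bij_betw_def by (auto simp: case_prod_unfold)

lemma pair_eqI:
  assumes "p \<in> Q" "p' \<in> Q"
    and "{root_of (fst p), root_of (snd p)} \<inter> {root_of (fst p'), root_of (snd p')} \<noteq> {}"
  shows "p = p'"
proof -
  have "{fst p, snd p} = {fst p', snd p'}"
    using cross_edge_eqI_shared_root[OF pair_cross_edge pair_cross_edge] assms by blast
  then show ?thesis
    using orientation assms(1,2) unfolding bij_betw_def inj_on_def by (simp add: case_prod_unfold)
qed

lemma pair_roots_neq: "p \<in> Q \<Longrightarrow> root_of (fst p) \<noteq> root_of (snd p)"
  using cross_edge_roots_neq pair_cross_edge by blast

lemma pair_fst_inj: "p \<in> Q \<Longrightarrow> p' \<in> Q \<Longrightarrow> fst p = fst p' \<Longrightarrow> p = p'"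
  using pair_eqI[of p p'] by auto

lemma pair_vertices:
  assumes "p \<in> Q"
  shows "fst p \<in> V - R" "snd p \<in> V - R" "parent (snd p) \<in> V - R"
    and "parent (parent (snd p)) \<in> V - R"
proof -
  have e: "{fst p, snd p} \<in> cross_edges" "{snd p, fst p} \<in> cross_edges"
    using pair_cross_edge[OF assms] by (simp_all add: insert_commute)
  have d: "3 \<le> depth (fst p)" "3 \<le> depth (snd p)"
    using cross_edge_depth[OF e(1)] cross_edge_depth[OF e(2)] .
  have V: "fst p \<in> V" "snd p \<in> V" using cross_edge_endpoints[OF e(1)] by blast+
  show v: "fst p \<in> V - R" "snd p \<in> V - R"
    using V d depth_eq_0_iff[of "fst p"] depth_eq_0_iff[of "snd p"] by auto
  have c: "parent (snd p) \<in> V" "depth (snd p) = Suc (depth (parent (snd p)))"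
    using parent_in_V[OF v(2)] depth_parent[OF v(2)] .
  then show c': "parent (snd p) \<in> V - R" using d depth_eq_0_iff[of "parent (snd p)"] by auto
  have "parent (parent (snd p)) \<in> V" "depth (parent (snd p)) = Suc (depth (parent (parent (snd p))))"
    using parent_in_V[OF c'] depth_parent[OF c'] .
  then show "parent (parent (snd p)) \<in> V - R"
    using c d depth_eq_0_iff[of "parent (parent (snd p))"] by auto
qed

lemma pair_fst_not_leaf: "p \<in> Q \<Longrightarrow> fst p \<notin> leaves V E R"
  using cross_endpoint_not_leaf[OF pair_cross_edge] pair_vertices by blast

lemma pair_endpoints_cross: "p \<in> Q \<Longrightarrow> fst p \<in> \<Union>cross_edges \<and> snd p \<in> \<Union>cross_edges"
  using pair_cross_edge by blast

lemma edge_cases: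
  assumes "e \<in> E"
  shows "(\<exists>w\<in>V - R. e = {w, parent w}) \<or> (\<exists>p\<in>Q. e = {fst p, snd p})"
proof (cases "e \<in> tree_edges")
  case True
  then show ?thesis unfolding tree_edges_def by blast
next
  case False
  then have "e \<in> (\<lambda>(g, v). {g, v}) ` Q"
    using assms orientation unfolding bij_betw_def cross_edges_def by blast
  then show ?thesis by (auto simp: case_prod_unfold)
qed

definition closing_vertices :: "'a \<times> 'a \<Rightarrow> 'a set" where
  "closing_vertices p = {snd p, parent (snd p)}"

lemma closing_vertices_in_V: "p \<in> Q \<Longrightarrow> closing_vertices p \<subseteq> V"
  unfolding closing_vertices_def using pair_vertices by blast

lemma root_of_closing_vertex:
  assumes "p \<in> Q" "u \<in> closing_vertices p"
  shows "root_of u = root_of (snd p)"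
  using assms(2) root_of_parent[OF pair_vertices(2)[OF assms(1)]]
  unfolding closing_vertices_def by auto

lemma card_closing_vertices:
  assumes "p \<in> Q"
  shows "card (closing_vertices p) = 2"
  unfolding closing_vertices_def using parent_neq[OF pair_vertices(2)[OF assms]] by simp

lemma closing_vertices_disjoint:
  assumes "p \<in> Q" "p' \<in> Q" "p \<noteq> p'"
  shows "closing_vertices p \<inter> closing_vertices p' = {}"
proof (rule equals0I)
  fix u assume "u \<in> closing_vertices p \<inter> closing_vertices p'"
  then have "root_of (snd p) = root_of (snd p')"
    using root_of_closing_vertex assms(1,2) by (metis IntD1 IntD2)
  then show False using pair_eqI[of p p'] assms by auto
qed

lemma card_Union_closing_vertices:
  assumes "P \<subseteq> Q"
  shows "card (\<Union>(closing_vertices ` P)) = 2 * card P"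
proof -
  have "card (\<Union>(closing_vertices ` P)) = (\<Sum>p\<in>P. card (closing_vertices p))"
  proof (rule card_UN_disjoint)
    show "finite P" using finite_Q assms finite_subset by blast
    show "\<forall>p\<in>P. finite (closing_vertices p)" by (simp add: closing_vertices_def)
    show "\<forall>p\<in>P. \<forall>p'\<in>P. p \<noteq> p' \<longrightarrow> closing_vertices p \<inter> closing_vertices p' = {}"
      using closing_vertices_disjoint assms by blast
  qed
  also have "\<dots> = (\<Sum>p\<in>P. 2)" using card_closing_vertices assms by (intro sum.cong) auto
  also have "\<dots> = 2 * card P" by simp
  finally show ?thesis .
qed

lemma closing_vertex_not_in_tree_of_fst:
  assumes "p \<in> Q" "q \<in> Q" "w \<in> V" "root_of w = root_of (fst p)"
  shows "w \<notin> closing_vertices q"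
proof
  assume "w \<in> closing_vertices q"
  then have "root_of (fst p) = root_of (snd q)" using root_of_closing_vertex assms by simp
  then have "p = q" using pair_eqI[of p q] assms(1,2) by auto
  then show False using pair_roots_neq assms(1) \<open>root_of (fst p) = root_of (snd q)\<close> by simp
qed

lemma card_unembedded_insert: "w \<in> V - U \<Longrightarrow> card (V - U) = Suc (card (V - insert w U))"
proof -
  assume "w \<in> V - U"
  moreover have "V - insert w U = (V - U) - {w}" by blast
  ultimately show ?thesis using card_Suc_Diff1[of "V - U" w] finite_V by simp
qed

definition children :: "'a set \<Rightarrow> 'a \<Rightarrow> 'a set" where
  "children U x = {w \<in> V - U. parent w = x}"

definition unused_nbrs :: "'a set \<Rightarrow> ('a \<Rightarrow> 'b) \<Rightarrow> 'b set set \<Rightarrow> 'a \<Rightarrow> 'b set" where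
  "unused_nbrs U \<phi> C x = {y \<in> W - \<phi> ` U. {\<phi> x, y} \<in> C}"

definition available :: "'a set \<Rightarrow> ('a \<Rightarrow> 'b) \<Rightarrow> ('a \<times> 'a) set \<Rightarrow> ('a \<times> 'a \<Rightarrow> 'b set) \<Rightarrow> 'b set"
  where "available U \<phi> P2 cand = W - \<phi> ` U - \<Union>(cand ` P2)"

definition tree_embedding :: "'a set \<Rightarrow> ('a \<Rightarrow> 'b) \<Rightarrow> 'b set set \<Rightarrow> bool" where
  "tree_embedding U \<phi> Red \<longleftrightarrow> R \<subseteq> U \<and> U \<subseteq> V \<and> inj_on \<phi> U \<and> \<phi> ` U \<subseteq> W \<and>
     (\<forall>r\<in>R. \<phi> r = \<rho>0 r) \<and> (\<forall>w\<in>U - R. parent w \<in> U \<and> {\<phi> w, \<phi> (parent w)} \<in> Red)"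

definition colouring_shape :: "'a set \<Rightarrow> ('a \<Rightarrow> 'b) \<Rightarrow> 'b set set \<Rightarrow> 'b set set \<Rightarrow> bool" where
  "colouring_shape U \<phi> Red Blue \<longleftrightarrow> Red \<union> Blue \<subseteq> Kedges W \<and>
     (\<forall>e\<in>Red \<union> Blue. \<exists>x\<in>U - leaves V E R. \<phi> x \<in> e)"

text \<open>
  A state consists of the embedded vertices \<open>U\<close> with their images \<open>\<phi>\<close>, the cross pairs \<open>P1\<close>
  whose gadget is not built yet, the cross pairs \<open>P2\<close> with a built gadget, whose two reserved
  host vertices \<open>cand p\<close> are joined in red to the image of \<open>fst p\<close>, and the coloured edges.
\<close>

definition cross_bookkeeping :: "'a set \<Rightarrow> ('a \<Rightarrow> 'b) \<Rightarrow> ('a \<times> 'a) set \<Rightarrow> ('a \<times> 'a) set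
    \<Rightarrow> ('a \<times> 'a \<Rightarrow> 'b set) \<Rightarrow> 'b set set \<Rightarrow> bool" where
  "cross_bookkeeping U \<phi> P1 P2 cand Red \<longleftrightarrow>
     P1 \<inter> P2 = {} \<and> P1 \<union> P2 \<subseteq> Q \<and>
     (\<forall>p\<in>Q - (P1 \<union> P2). fst p \<in> U \<and> snd p \<in> U \<and> {\<phi> (fst p), \<phi> (snd p)} \<in> Red) \<and>
     (\<forall>p\<in>P1 \<union> P2. closing_vertices p \<inter> U = {}) \<and>
     (\<forall>p\<in>P2. fst p \<in> U \<and> card (cand p) = 2 \<and> cand p \<subseteq> W - \<phi> ` U \<and>
        (\<forall>y\<in>cand p. {\<phi> (fst p), y} \<in> Red)) \<and>
     (\<forall>p\<in>P2. \<forall>p'\<in>P2. p \<noteq> p' \<longrightarrow> cand p \<inter> cand p' = {}) \<and>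
     (\<forall>x\<in>U. unused_nbrs U \<phi> Red x \<noteq> {} \<longrightarrow> x \<in> fst ` (Q - P1))"

text \<open>
  The first inequality also reserves the two blue edges that a pending gadget at \<open>x\<close> will add;
  at the end it is property (c). The second one leaves two free host vertices whenever a child
  of \<open>x\<close> is to be embedded.
\<close>

definition vertex_budget :: "'a set \<Rightarrow> ('a \<Rightarrow> 'b) \<Rightarrow> ('a \<times> 'a) set \<Rightarrow> 'b set set \<Rightarrow> 'b set set
    \<Rightarrow> 'a \<Rightarrow> bool" where
  "vertex_budget U \<phi> P1 Red Blue x \<longleftrightarrow>
     (x \<notin> leaves V E R \<longrightarrow> card (unused_nbrs U \<phi> Blue x) + card (children U x)
        + (if x \<in> fst ` P1 then 2 else 0) \<le> maxdeg V E) \<and>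
     (children U x \<noteq> {} \<longrightarrow> card (unused_nbrs U \<phi> (Red \<union> Blue) x) + card (children U x)
        + (if x \<in> R then 0 else 1) \<le> maxdeg V E)"

definition state :: "'a set \<Rightarrow> ('a \<Rightarrow> 'b) \<Rightarrow> ('a \<times> 'a) set \<Rightarrow> ('a \<times> 'a) set
    \<Rightarrow> ('a \<times> 'a \<Rightarrow> 'b set) \<Rightarrow> 'b set set \<Rightarrow> 'b set set \<Rightarrow> bool" where
  "state U \<phi> P1 P2 cand Red Blue \<longleftrightarrow> tree_embedding U \<phi> Red \<and> colouring_shape U \<phi> Red Blue \<and>
     cross_bookkeeping U \<phi> P1 P2 cand Red \<and> (\<forall>x\<in>U. vertex_budget U \<phi> P1 Red Blue x)"

lemma tree_embeddingD:
  assumes "tree_embedding U \<phi> Red"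
  shows roots_embedded: "R \<subseteq> U" and embedded_subset: "U \<subseteq> V" and embedding_inj: "inj_on \<phi> U"
    and embedding_to_W: "\<phi> ` U \<subseteq> W" and embedding_roots: "\<forall>r\<in>R. \<phi> r = \<rho>0 r"
    and parent_embedded: "\<forall>w\<in>U - R. parent w \<in> U \<and> {\<phi> w, \<phi> (parent w)} \<in> Red"
  using assms unfolding tree_embedding_def by blast+

lemma colouring_shapeD:
  assumes "colouring_shape U \<phi> Red Blue"
  shows coloured_in_Kedges: "Red \<union> Blue \<subseteq> Kedges W"
    and coloured_at_inner: "\<forall>e\<in>Red \<union> Blue. \<exists>x\<in>U - leaves V E R. \<phi> x \<in> e"
  using assms unfolding colouring_shape_def by blast+

lemma cross_bookkeepingD:
  assumes "cross_bookkeeping U \<phi> P1 P2 cand Red"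
  shows pending_disjoint: "P1 \<inter> P2 = {}" and pending_subset: "P1 \<union> P2 \<subseteq> Q"
    and completed_pairs: "\<forall>p\<in>Q - (P1 \<union> P2). fst p \<in> U \<and> snd p \<in> U \<and> {\<phi> (fst p), \<phi> (snd p)} \<in> Red"
    and pending_closing: "\<forall>p\<in>P1 \<union> P2. closing_vertices p \<inter> U = {}"
    and gadgets: "\<forall>p\<in>P2. fst p \<in> U \<and> card (cand p) = 2 \<and> cand p \<subseteq> W - \<phi> ` U \<and>
        (\<forall>y\<in>cand p. {\<phi> (fst p), y} \<in> Red)"
    and gadgets_disjoint: "\<forall>p\<in>P2. \<forall>p'\<in>P2. p \<noteq> p' \<longrightarrow> cand p \<inter> cand p' = {}"
    and red_to_unused: "\<forall>x\<in>U. unused_nbrs U \<phi> Red x \<noteq> {} \<longrightarrow> x \<in> fst ` (Q - P1)"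
  using assms unfolding cross_bookkeeping_def by blast+

lemma pending_pair:
  assumes "cross_bookkeeping U \<phi> P1 P2 cand Red" "p \<in> P1 \<union> P2"
  shows "p \<in> Q" and "snd p \<in> V - U - R" and "parent (snd p) \<in> V - U - R"
    and "parent (snd p) \<noteq> snd p" and "parent (parent (snd p)) \<notin> R"
proof -
  show pQ: "p \<in> Q" using pending_subset[OF assms(1)] assms(2) by blast
  have "closing_vertices p \<inter> U = {}" using pending_closing[OF assms(1)] assms(2) by blast
  then show "snd p \<in> V - U - R" "parent (snd p) \<in> V - U - R"
    using pair_vertices[OF pQ] unfolding closing_vertices_def by auto
  show "parent (snd p) \<noteq> snd p" using parent_neq pair_vertices(2)[OF pQ] by blast
  show "parent (parent (snd p)) \<notin> R" using pair_vertices(4)[OF pQ] by blast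
qed

lemma finite_children: "finite (children U x)"
  unfolding children_def using finite_V by simp

lemma children_anti: "U \<subseteq> U' \<Longrightarrow> children U' x \<subseteq> children U x"
  unfolding children_def by blast

lemma card_children_insert:
  assumes "w \<in> children U x"
  shows "card (children (insert w U) x) + 1 = card (children U x)"
proof -
  have "children (insert w U) x = children U x - {w}" unfolding children_def by blast
  then show ?thesis using card_Suc_Diff1[OF finite_children assms] by simp
qed

lemma card_children_le: "R \<subseteq> U \<Longrightarrow> card (children U x) \<le> card {w \<in> V - R. parent w = x}"
  unfolding children_def using finite_V by (intro card_mono) auto

lemma finite_unused_nbrs: "finite (unused_nbrs U \<phi> C x)"
  unfolding unused_nbrs_def using finite_W by simp

lemma unused_nbrs_mono: "C \<subseteq> C' \<Longrightarrow> unused_nbrs U \<phi> C x \<subseteq> unused_nbrs U \<phi> C' x"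
  unfolding unused_nbrs_def by blast

lemma unused_nbrs_extend:
  assumes "x \<in> U" "U \<subseteq> U'" "\<forall>u\<in>U. \<phi>' u = \<phi> u"
  shows "unused_nbrs U' \<phi>' C' x \<subseteq> unused_nbrs U \<phi> C x \<union> unused_nbrs U' \<phi>' (C' - C) x"
proof -
  have "\<phi> ` U \<subseteq> \<phi>' ` U'" using assms(2,3) by force
  then show ?thesis unfolding unused_nbrs_def using assms(1,3) by auto
qed

lemma unused_nbrs_of_used_edges: "\<forall>e\<in>N. e \<subseteq> \<phi> ` U \<Longrightarrow> unused_nbrs U \<phi> N x = {}"
  unfolding unused_nbrs_def by blast

lemma unused_nbrs_fresh_vertex:
  assumes "colouring_shape U \<phi> Red Blue" "\<phi>' u \<notin> \<phi> ` U" "U \<subseteq> U'" "\<forall>z\<in>U. \<phi>' z = \<phi> z"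
  shows "unused_nbrs U' \<phi>' C u \<subseteq> unused_nbrs U' \<phi>' (C - (Red \<union> Blue)) u"
proof
  fix y assume y: "y \<in> unused_nbrs U' \<phi>' C u"
  have "{\<phi>' u, y} \<notin> Red \<union> Blue"
  proof
    assume "{\<phi>' u, y} \<in> Red \<union> Blue"
    then obtain z where "z \<in> U" "\<phi> z \<in> {\<phi>' u, y}" using coloured_at_inner[OF assms(1)] by blast
    then have "y \<in> \<phi>' ` U'" using assms(2-4) by force
    then show False using y unfolding unused_nbrs_def by blast
  qed
  then show "y \<in> unused_nbrs U' \<phi>' (C - (Red \<union> Blue)) u" using y unfolding unused_nbrs_def by blast
qed

lemma unused_nbrs_untouched:
  assumes "u \<in> U" "U \<subseteq> U'" "\<forall>z\<in>U. \<phi>' z = \<phi> z" "\<forall>e\<in>C' - C. \<phi> u \<notin> e"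
  shows "unused_nbrs U' \<phi>' C' u \<subseteq> unused_nbrs U \<phi> C u"
proof -
  have "unused_nbrs U' \<phi>' (C' - C) u = {}"
    using assms(1,3,4) unfolding unused_nbrs_def by auto
  then show ?thesis using unused_nbrs_extend[OF assms(1-3)] by blast
qed

lemma unused_nbrs_one_new:
  assumes "x \<in> U" "U \<subseteq> U'" "\<forall>z\<in>U. \<phi>' z = \<phi> z"
    and "\<forall>e\<in>C' - C. \<phi> x \<in> e \<longrightarrow> e \<subseteq> insert t (\<phi>' ` U')"
  shows "unused_nbrs U' \<phi>' C' x \<subseteq> insert t (unused_nbrs U \<phi> C x)"
proof -
  have "unused_nbrs U' \<phi>' (C' - C) x \<subseteq> {t}" using assms(1,3,4) unfolding unused_nbrs_def by auto
  then show ?thesis using unused_nbrs_extend[OF assms(1-3)] by blast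
qed

lemma tree_embedding_mono: "tree_embedding U \<phi> Red \<Longrightarrow> Red \<subseteq> Red' \<Longrightarrow> tree_embedding U \<phi> Red'"
  unfolding tree_embedding_def by blast

lemma tree_embedding_extend:
  assumes T: "tree_embedding U \<phi> Red" and w: "w \<in> V - U" "parent w \<in> U"
    and s: "s \<in> W - \<phi> ` U" and red: "Red \<subseteq> Red'" "{s, \<phi> (parent w)} \<in> Red'"
  shows "tree_embedding (insert w U) (\<phi>(w := s)) Red'"
proof -
  have "w \<notin> R" "parent w \<noteq> w" using w roots_embedded[OF T] by auto
  then show ?thesis
    using tree_embeddingD[OF T] w s red unfolding tree_embedding_def inj_on_def by auto
qed

lemma colouring_shape_extend:
  assumes "colouring_shape U \<phi> Red Blue" "w \<notin> U"
  shows "colouring_shape (insert w U) (\<phi>(w := s)) Red Blue"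
  unfolding colouring_shape_def
proof (intro conjI ballI)
  show "Red \<union> Blue \<subseteq> Kedges W" using coloured_in_Kedges[OF assms(1)] .
  fix e assume "e \<in> Red \<union> Blue"
  then obtain x where "x \<in> U - leaves V E R" "\<phi> x \<in> e" using coloured_at_inner[OF assms(1)] by blast
  then show "\<exists>x\<in>insert w U - leaves V E R. (\<phi>(w := s)) x \<in> e" using assms(2) by force
qed

lemma colouring_shape_add_star:
  assumes "colouring_shape U \<phi> Red Blue" "x \<in> U - leaves V E R" "\<forall>t\<in>T. {\<phi> x, t} \<in> Kedges W"
    and "Red' \<union> Blue' \<subseteq> Red \<union> Blue \<union> (\<lambda>t. {\<phi> x, t}) ` T"
  shows "colouring_shape U \<phi> Red' Blue'"
  using assms unfolding colouring_shape_def by blast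

lemma fresh_pair_uncoloured:
  assumes "colouring_shape U \<phi> Red Blue" "s \<notin> \<phi> ` U" "t \<notin> \<phi> ` U"
  shows "{s, t} \<notin> Red \<union> Blue"
proof
  assume "{s, t} \<in> Red \<union> Blue"
  then obtain z where "z \<in> U" "\<phi> z \<in> {s, t}" using coloured_at_inner[OF assms(1)] by blast
  then show False using assms(2,3) by auto
qed

lemma red_to_unused_extend:
  assumes B: "cross_bookkeeping U \<phi> P1 P2 cand Red" and C: "colouring_shape U \<phi> Red Blue"
    and U': "U \<subseteq> U'" and agree: "\<forall>z\<in>U. \<phi>' z = \<phi> z" and fresh: "\<forall>u\<in>U' - U. \<phi>' u \<notin> \<phi> ` U"
    and used: "\<forall>e\<in>Red' - Red. e \<subseteq> \<phi>' ` U'"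
  shows "\<forall>u\<in>U'. unused_nbrs U' \<phi>' Red' u \<noteq> {} \<longrightarrow> u \<in> fst ` (Q - P1)"
proof (intro ballI impI)
  fix u assume u: "u \<in> U'" and nonempty: "unused_nbrs U' \<phi>' Red' u \<noteq> {}"
  have new_used: "unused_nbrs U' \<phi>' (Red' - D) u = {}" if "Red \<subseteq> D" for D
    using used that by (intro unused_nbrs_of_used_edges) blast
  show "u \<in> fst ` (Q - P1)"
  proof (cases "u \<in> U")
    case True
    then have "unused_nbrs U \<phi> Red u \<noteq> {}"
      using unused_nbrs_extend[OF True U' agree, of Red' Red] new_used[of Red] nonempty by blast
    then show ?thesis using red_to_unused[OF B] True by blast
  next
    case False
    then have "unused_nbrs U' \<phi>' Red' u \<subseteq> unused_nbrs U' \<phi>' (Red' - (Red \<union> Blue)) u"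
      using fresh u by (intro unused_nbrs_fresh_vertex[OF C _ U' agree]) blast
    then show ?thesis using new_used[of "Red \<union> Blue"] nonempty by blast
  qed
qed

lemma vertex_budget_fresh:
  assumes C: "colouring_shape U \<phi> Red Blue" and U': "U \<subseteq> U'" and agree: "\<forall>z\<in>U. \<phi>' z = \<phi> z"
    and u: "u \<in> V - R" "\<phi>' u \<notin> \<phi> ` U"
    and new: "unused_nbrs U' \<phi>' (Red' \<union> Blue' - (Red \<union> Blue)) u \<subseteq> N" "finite N"
    and small: "card N + card (children U' u) \<le> card {w \<in> V - R. parent w = u}"
    and gadget_centre: "u \<in> fst ` P1 \<Longrightarrow> u \<in> \<Union>cross_edges"
  shows "vertex_budget U' \<phi>' P1 Red' Blue' u"
proof -
  have "unused_nbrs U' \<phi>' (Red' \<union> Blue') u \<subseteq> N"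
    using unused_nbrs_fresh_vertex[OF C u(2) U' agree] new(1) by blast
  then have "card (unused_nbrs U' \<phi>' (Red' \<union> Blue') u) \<le> card N" by (rule card_mono[OF new(2)])
  moreover have "card (unused_nbrs U' \<phi>' Blue' u) \<le> card (unused_nbrs U' \<phi>' (Red' \<union> Blue') u)"
    using finite_unused_nbrs by (intro card_mono unused_nbrs_mono) auto
  ultimately show ?thesis
    unfolding vertex_budget_def
    using degree_bound[of u] u(1) small gadget_centre by (auto split: if_splits)
qed

lemma vertex_budget_untouched:
  assumes old: "vertex_budget U \<phi> P1 Red Blue u" and u: "u \<in> U" "U \<subseteq> U'" "\<forall>z\<in>U. \<phi>' z = \<phi> z"
    and new_edges: "\<forall>e\<in>(Red' - Red) \<union> (Blue' - Blue). \<phi> u \<notin> e"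
    and "P1' \<subseteq> P1"
  shows "vertex_budget U' \<phi>' P1' Red' Blue' u"
proof -
  have "unused_nbrs U' \<phi>' Blue' u \<subseteq> unused_nbrs U \<phi> Blue u"
    "unused_nbrs U' \<phi>' (Red' \<union> Blue') u \<subseteq> unused_nbrs U \<phi> (Red \<union> Blue) u"
    using new_edges by (intro unused_nbrs_untouched[OF u]; blast)+
  then have "card (unused_nbrs U' \<phi>' Blue' u) \<le> card (unused_nbrs U \<phi> Blue u)"
    "card (unused_nbrs U' \<phi>' (Red' \<union> Blue') u) \<le> card (unused_nbrs U \<phi> (Red \<union> Blue) u)"
    using finite_unused_nbrs by (blast intro: card_mono)+
  moreover have "children U' u \<subseteq> children U u" using children_anti[OF u(2)] .
  then have "card (children U' u) \<le> card (children U u)" using finite_children by (blast intro: card_mono)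
  moreover have "(if u \<in> fst ` P1' then 2 else 0) \<le> (if u \<in> fst ` P1 then 2 else (0::nat))"
    using \<open>P1' \<subseteq> P1\<close> by auto
  ultimately show ?thesis
    using old \<open>children U' u \<subseteq> children U u\<close> unfolding vertex_budget_def by fastforce
qed

lemma vertex_budget_embed_child:
  assumes old: "vertex_budget U \<phi> P1 Red Blue x" and x: "x \<in> U" and w: "w \<in> children U x"
    and U': "insert w U \<subseteq> U'" and agree: "\<forall>z\<in>U. \<phi>' z = \<phi> z"
    and new_edges: "\<forall>e\<in>(Red' - Red) \<union> (Blue' - Blue). \<phi> x \<in> e \<longrightarrow> e \<subseteq> insert t (\<phi>' ` U')"
    and "P1' \<subseteq> P1"
  shows "vertex_budget U' \<phi>' P1' Red' Blue' x"
proof -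
  have "U \<subseteq> U'" using U' by blast
  have nbrs: "card (unused_nbrs U' \<phi>' C' x) \<le> Suc (card (unused_nbrs U \<phi> C x))"
    if "C' - C \<subseteq> (Red' - Red) \<union> (Blue' - Blue)" for C C'
  proof (rule card_le_Suc_if_subset_insert[OF finite_unused_nbrs])
    show "unused_nbrs U' \<phi>' C' x \<subseteq> insert t (unused_nbrs U \<phi> C x)"
      using that new_edges by (intro unused_nbrs_one_new[OF x \<open>U \<subseteq> U'\<close> agree]) blast
  qed
  have "children U' x \<subseteq> children (insert w U) x" using U' by (rule children_anti)
  then have "card (children U' x) \<le> card (children (insert w U) x)"
    by (rule card_mono[OF finite_children])
  then have "card (children U' x) + 1 \<le> card (children U x)"
    using card_children_insert[OF w] by linarith
  moreover have "(if x \<in> fst ` P1' then 2 else 0) \<le> (if x \<in> fst ` P1 then 2 else (0::nat))"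
    using \<open>P1' \<subseteq> P1\<close> by auto
  ultimately show ?thesis
    using old w nbrs[of Blue' Blue] nbrs[of "Red' \<union> Blue'" "Red \<union> Blue"]
    unfolding vertex_budget_def by fastforce
qed

lemma cross_bookkeeping_grow:
  assumes B: "cross_bookkeeping U \<phi> P1 P2 cand Red" and C: "colouring_shape U \<phi> Red Blue"
    and x: "x \<in> U" and w: "w \<notin> U" "w \<notin> \<Union>(closing_vertices ` (P1 \<union> P2))"
    and s: "s \<in> available U \<phi> P2 cand"
  shows "cross_bookkeeping (insert w U) (\<phi>(w := s)) P1 P2 cand (insert {\<phi> x, s} Red)"
proof -
  let ?U = "insert w U" and ?\<phi> = "\<phi>(w := s)" and ?Red = "insert {\<phi> x, s} Red"
  have agree: "\<forall>u\<in>U. ?\<phi> u = \<phi> u" using w by auto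
  have img: "?\<phi> ` ?U = insert s (\<phi> ` U)" using w by auto
  have s': "s \<in> W - \<phi> ` U" "s \<notin> \<Union>(cand ` P2)" using s unfolding available_def by auto
  show ?thesis
    unfolding cross_bookkeeping_def
  proof (intro conjI)
    show "P1 \<inter> P2 = {}" "P1 \<union> P2 \<subseteq> Q" using cross_bookkeepingD[OF B] by blast+
    show "\<forall>p\<in>Q - (P1 \<union> P2). fst p \<in> ?U \<and> snd p \<in> ?U \<and> {?\<phi> (fst p), ?\<phi> (snd p)} \<in> ?Red"
      using completed_pairs[OF B] agree by auto
    show "\<forall>p\<in>P1 \<union> P2. closing_vertices p \<inter> ?U = {}" using pending_closing[OF B] w(2) by blast
    show "\<forall>p\<in>P2. fst p \<in> ?U \<and> card (cand p) = 2 \<and> cand p \<subseteq> W - ?\<phi> ` ?U \<and>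
        (\<forall>y\<in>cand p. {?\<phi> (fst p), y} \<in> ?Red)"
      using gadgets[OF B] agree img s'(2) by auto
    show "\<forall>p\<in>P2. \<forall>p'\<in>P2. p \<noteq> p' \<longrightarrow> cand p \<inter> cand p' = {}"
      using gadgets_disjoint[OF B] by blast
    show "\<forall>u\<in>?U. unused_nbrs ?U ?\<phi> ?Red u \<noteq> {} \<longrightarrow> u \<in> fst ` (Q - P1)"
      by (rule red_to_unused_extend[OF B C _ agree]) (use img x s' in auto)
  qed
qed

lemma vertex_budgets_grow:
  assumes S: "state U \<phi> P1 P2 cand Red Blue"
    and x: "x \<in> U" and w: "w \<in> children U x"
    and s: "s \<in> W - \<phi> ` U" "s' \<in> W - \<phi> ` U" "s \<noteq> s'"
  shows "\<forall>u\<in>insert w U. vertex_budget (insert w U) (\<phi>(w := s)) P1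
           (insert {\<phi> x, s} Red) (insert {\<phi> x, s'} Blue) u"
proof
  let ?U = "insert w U" and ?\<phi> = "\<phi>(w := s)"
    and ?Red = "insert {\<phi> x, s} Red" and ?Blue = "insert {\<phi> x, s'} Blue"
  have T: "tree_embedding U \<phi> Red" and C: "colouring_shape U \<phi> Red Blue"
    and B: "cross_bookkeeping U \<phi> P1 P2 cand Red" and D: "\<forall>u\<in>U. vertex_budget U \<phi> P1 Red Blue u"
    using S unfolding state_def by blast+
  have w': "w \<in> V - R" "w \<notin> U" using w roots_embedded[OF T] unfolding children_def by auto
  have agree: "\<forall>u\<in>U. ?\<phi> u = \<phi> u" using w' by auto
  have img: "?\<phi> ` ?U = insert s (\<phi> ` U)" using w' by auto
  fix u assume u: "u \<in> ?U"
  consider (new) "u = w" | (parent) "u = x" | (other) "u \<in> U" "u \<noteq> x" using u x by blast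
  then show "vertex_budget ?U ?\<phi> P1 ?Red ?Blue u"
  proof cases
    case new
    have "unused_nbrs ?U ?\<phi> (?Red \<union> ?Blue - (Red \<union> Blue)) w \<subseteq> {}"
      using s x img unfolding unused_nbrs_def by (auto simp: doubleton_eq_iff)
    then show ?thesis
      using new w' s agree roots_embedded[OF T] card_children_le[of ?U w] pending_subset[OF B]
        pair_endpoints_cross
      by (intro vertex_budget_fresh[where N = "{}", OF C]) auto
  next
    case parent
    have "\<forall>e\<in>(?Red - Red) \<union> (?Blue - Blue). \<phi> x \<in> e \<longrightarrow> e \<subseteq> insert s' (?\<phi> ` ?U)"
      using img x by auto
    then show ?thesis unfolding parent
      by (rule vertex_budget_embed_child[OF D[rule_format, OF x] x w order_refl agree _ order_refl])
  next
    case other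
    have "\<phi> u \<noteq> \<phi> x" using embedding_inj[OF T] other x by (meson inj_onD)
    moreover have "\<phi> u \<noteq> s" "\<phi> u \<noteq> s'" using other s by auto
    ultimately have "\<forall>e\<in>(?Red - Red) \<union> (?Blue - Blue). \<phi> u \<notin> e" by auto
    then show ?thesis
      by (rule vertex_budget_untouched[OF D[rule_format, OF other(1)] other(1) subset_insertI agree])
        simp_all
  qed
qed

lemma state_grow:
  assumes S: "state U \<phi> P1 P2 cand Red Blue"
    and x: "x \<in> U" and w: "w \<in> children U x"
    and w_free: "w \<notin> \<Union>(closing_vertices ` (P1 \<union> P2))"
    and s: "s \<in> available U \<phi> P2 cand" "s' \<in> available U \<phi> P2 cand" "s \<noteq> s'"
  shows "state (insert w U) (\<phi>(w := s)) P1 P2 cand (insert {\<phi> x, s} Red) (insert {\<phi> x, s'} Blue)"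
proof -
  let ?U = "insert w U" and ?\<phi> = "\<phi>(w := s)"
  have T: "tree_embedding U \<phi> Red" and C: "colouring_shape U \<phi> Red Blue"
    and B: "cross_bookkeeping U \<phi> P1 P2 cand Red"
    using S unfolding state_def by blast+
  have w': "w \<in> V - U" "parent w = x" "w \<in> V - R"
    using w roots_embedded[OF T] unfolding children_def by auto
  have s': "s \<in> W - \<phi> ` U" "s' \<in> W - \<phi> ` U" using s unfolding available_def by auto
  have x': "x \<in> ?U - leaves V E R" "?\<phi> x = \<phi> x" "\<phi> x \<in> W"
    using x w' parent_not_leaf[of w] embedding_to_W[OF T] by auto
  have edges: "{\<phi> x, s} \<in> Kedges W" "{\<phi> x, s'} \<in> Kedges W"
    using x x' s' by (auto intro!: doubleton_in_Kedges)
  have "tree_embedding ?U ?\<phi> (insert {\<phi> x, s} Red)"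
    by (rule tree_embedding_extend[OF T]) (use w' x s' in \<open>auto simp: insert_commute\<close>)
  moreover have "colouring_shape ?U ?\<phi> Red Blue" using colouring_shape_extend[OF C] w' by blast
  then have "colouring_shape ?U ?\<phi> (insert {\<phi> x, s} Red) (insert {\<phi> x, s'} Blue)"
    by (rule colouring_shape_add_star[where T = "{s, s'}", OF _ x'(1)]) (use x'(2) edges in auto)
  moreover have "cross_bookkeeping ?U ?\<phi> P1 P2 cand (insert {\<phi> x, s} Red)"
    using cross_bookkeeping_grow[OF B C x _ w_free s(1)] w' by blast
  moreover have "\<forall>u\<in>?U. vertex_budget ?U ?\<phi> P1 (insert {\<phi> x, s} Red) (insert {\<phi> x, s'} Blue) u"
    using vertex_budgets_grow[OF S x w s'(1,2) s(3)] .
  ultimately show ?thesis unfolding state_def by blast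
qed

lemma cross_bookkeeping_gadget:
  assumes B: "cross_bookkeeping U \<phi> P1 P2 cand Red" and T: "tree_embedding U \<phi> Red"
    and p: "p \<in> P1" "fst p \<in> U"
    and y: "y1 \<in> available U \<phi> P2 cand" "y2 \<in> available U \<phi> P2 cand" "y1 \<noteq> y2"
  shows "cross_bookkeeping U \<phi> (P1 - {p}) (insert p P2) (cand(p := {y1, y2}))
     (insert {\<phi> (fst p), y2} (insert {\<phi> (fst p), y1} Red))"
proof -
  let ?Red = "insert {\<phi> (fst p), y2} (insert {\<phi> (fst p), y1} Red)" and ?cand = "cand(p := {y1, y2})"
  have pQ: "p \<in> Q" "p \<notin> P2" using p pending_subset[OF B] pending_disjoint[OF B] by blast+
  have y': "y1 \<in> W - \<phi> ` U" "y2 \<in> W - \<phi> ` U" "y1 \<notin> \<Union>(cand ` P2)" "y2 \<notin> \<Union>(cand ` P2)"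
    using y unfolding available_def by auto
  have red_out: "u \<in> fst ` (Q - (P1 - {p}))" if "u \<in> U" "unused_nbrs U \<phi> ?Red u \<noteq> {}" for u
  proof (cases "u = fst p")
    case False
    then have "\<phi> u \<noteq> \<phi> (fst p)" using embedding_inj[OF T] that(1) p(2) by (meson inj_onD)
    then have "unused_nbrs U \<phi> ?Red u \<subseteq> unused_nbrs U \<phi> Red u"
      using that(1) y' by (intro unused_nbrs_untouched) auto
    then show ?thesis using red_to_unused[OF B] that by blast
  qed (use pQ in auto)
  show ?thesis
    unfolding cross_bookkeeping_def
  proof (intro conjI)
    show "(P1 - {p}) \<inter> insert p P2 = {}" "P1 - {p} \<union> insert p P2 \<subseteq> Q"
      using cross_bookkeepingD(1,2)[OF B] pQ by blast+
    show "\<forall>q\<in>Q - (P1 - {p} \<union> insert p P2). fst q \<in> U \<and> snd q \<in> U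
        \<and> {\<phi> (fst q), \<phi> (snd q)} \<in> ?Red"
      using completed_pairs[OF B] by auto
    show "\<forall>q\<in>P1 - {p} \<union> insert p P2. closing_vertices q \<inter> U = {}"
      using pending_closing[OF B] p(1) by blast
    show "\<forall>q\<in>insert p P2. fst q \<in> U \<and> card (?cand q) = 2 \<and> ?cand q \<subseteq> W - \<phi> ` U \<and>
        (\<forall>y\<in>?cand q. {\<phi> (fst q), y} \<in> ?Red)"
      using gadgets[OF B] p(2) y' y(3) pQ(2) by auto
    show "\<forall>q\<in>insert p P2. \<forall>q'\<in>insert p P2. q \<noteq> q' \<longrightarrow> ?cand q \<inter> ?cand q' = {}"
      using gadgets_disjoint[OF B] y' pQ(2) by auto
    show "\<forall>u\<in>U. unused_nbrs U \<phi> ?Red u \<noteq> {} \<longrightarrow> u \<in> fst ` (Q - (P1 - {p}))"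
      using red_out by blast
  qed
qed

lemma vertex_budgets_gadget:
  assumes S: "state U \<phi> P1 P2 cand Red Blue"
    and p: "p \<in> P1" "fst p \<in> U" "children U (fst p) = {}"
    and new: "y1 \<in> W - \<phi> ` U" "y2 \<in> W - \<phi> ` U" "z1 \<in> W - \<phi> ` U" "z2 \<in> W - \<phi> ` U"
  shows "\<forall>u\<in>U. vertex_budget U \<phi> (P1 - {p})
     (insert {\<phi> (fst p), y2} (insert {\<phi> (fst p), y1} Red))
     (insert {\<phi> (fst p), z2} (insert {\<phi> (fst p), z1} Blue)) u"
proof
  let ?g = "fst p"
  let ?Red = "insert {\<phi> ?g, y2} (insert {\<phi> ?g, y1} Red)"
    and ?Blue = "insert {\<phi> ?g, z2} (insert {\<phi> ?g, z1} Blue)"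
  have T: "tree_embedding U \<phi> Red" and B: "cross_bookkeeping U \<phi> P1 P2 cand Red"
    and D: "\<forall>u\<in>U. vertex_budget U \<phi> P1 Red Blue u"
    using S unfolding state_def by blast+
  have pQ: "p \<in> Q" using p pending_subset[OF B] by blast
  fix u assume u: "u \<in> U"
  show "vertex_budget U \<phi> (P1 - {p}) ?Red ?Blue u"
  proof (cases "u = ?g")
    case True
    have not_pending: "?g \<notin> fst ` (P1 - {p})"
    proof
      assume "?g \<in> fst ` (P1 - {p})"
      then obtain q where "q \<in> P1 - {p}" "fst q = ?g" by (elim imageE) simp
      then show False using pair_fst_inj[of q p] pQ pending_subset[OF B] by auto
    qed
    have sub: "unused_nbrs U \<phi> ?Blue ?g \<subseteq> insert z1 (insert z2 (unused_nbrs U \<phi> Blue ?g))"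
      unfolding unused_nbrs_def by (auto simp: doubleton_eq_iff)
    have "card (unused_nbrs U \<phi> ?Blue ?g) \<le> card (insert z1 (insert z2 (unused_nbrs U \<phi> Blue ?g)))"
      using card_mono[OF _ sub] finite_unused_nbrs by simp
    also have "\<dots> \<le> card (unused_nbrs U \<phi> Blue ?g) + 2"
      using finite_unused_nbrs by (simp add: card_insert_if)
    finally have "card (unused_nbrs U \<phi> ?Blue ?g) \<le> card (unused_nbrs U \<phi> Blue ?g) + 2" .
    moreover have "?g \<in> fst ` P1" "?g \<notin> leaves V E R" using p(1) pair_fst_not_leaf[OF pQ] by auto
    then have "card (unused_nbrs U \<phi> Blue ?g) + card (children U ?g) + 2 \<le> maxdeg V E"
      using D[rule_format, OF p(2)] unfolding vertex_budget_def by simp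
    ultimately show ?thesis using True not_pending p(3) unfolding vertex_budget_def by simp
  next
    case False
    then have "\<phi> u \<noteq> \<phi> ?g" using embedding_inj[OF T] u p(2) by (meson inj_onD)
    then have new_edges: "\<forall>e\<in>(?Red - Red) \<union> (?Blue - Blue). \<phi> u \<notin> e" using u new by auto
    have "\<forall>z\<in>U. \<phi> z = \<phi> z" "P1 - {p} \<subseteq> P1" by auto
    from vertex_budget_untouched[OF D[rule_format, OF u] u order_refl this(1) new_edges this(2)]
    show ?thesis .
  qed
qed

lemma state_gadget:
  assumes S: "state U \<phi> P1 P2 cand Red Blue"
    and p: "p \<in> P1" "fst p \<in> U" "children U (fst p) = {}"
    and y: "y1 \<in> available U \<phi> P2 cand" "y2 \<in> available U \<phi> P2 cand" "y1 \<noteq> y2"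
    and z: "z1 \<in> W - \<phi> ` U" "z2 \<in> W - \<phi> ` U"
  shows "state U \<phi> (P1 - {p}) (insert p P2) (cand(p := {y1, y2}))
     (insert {\<phi> (fst p), y2} (insert {\<phi> (fst p), y1} Red))
     (insert {\<phi> (fst p), z2} (insert {\<phi> (fst p), z1} Blue))"
proof -
  let ?g = "fst p"
  have T: "tree_embedding U \<phi> Red" and C: "colouring_shape U \<phi> Red Blue"
    and B: "cross_bookkeeping U \<phi> P1 P2 cand Red"
    using S unfolding state_def by blast+
  have y': "y1 \<in> W - \<phi> ` U" "y2 \<in> W - \<phi> ` U" using y unfolding available_def by auto
  have g: "?g \<in> U - leaves V E R" "\<phi> ?g \<in> W"
    using p pending_subset[OF B] pair_fst_not_leaf embedding_to_W[OF T] by blast+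
  have edges: "{\<phi> ?g, t} \<in> Kedges W" if "t \<in> W - \<phi> ` U" for t
    using that g p(2) by (auto intro!: doubleton_in_Kedges)
  have "colouring_shape U \<phi> (insert {\<phi> ?g, y2} (insert {\<phi> ?g, y1} Red))
     (insert {\<phi> ?g, z2} (insert {\<phi> ?g, z1} Blue))"
    by (rule colouring_shape_add_star[OF C g(1), of "{y1, y2, z1, z2}"]) (use edges y' z in auto)
  moreover have "tree_embedding U \<phi> (insert {\<phi> ?g, y2} (insert {\<phi> ?g, y1} Red))"
    by (rule tree_embedding_mono[OF T]) blast
  ultimately show ?thesis
    unfolding state_def
    using cross_bookkeeping_gadget[OF B T p(1,2) y] vertex_budgets_gadget[OF S p y' z]
    by blast
qed

lemma cross_bookkeeping_close:
  assumes B: "cross_bookkeeping U \<phi> {} P2 cand Red" and C: "colouring_shape U \<phi> Red Blue"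
    and p: "p \<in> P2" and x: "parent (parent (snd p)) \<in> U"
    and s: "s \<in> available U \<phi> P2 cand" and y: "y \<in> cand p"
  shows "cross_bookkeeping (insert (snd p) (insert (parent (snd p)) U))
     (\<phi>(parent (snd p) := s, snd p := y)) {} (P2 - {p}) cand
     (insert {s, y} (insert {\<phi> (parent (parent (snd p))), s} Red))"
proof -
  let ?v = "snd p" let ?c = "parent ?v" let ?x = "parent ?c"
  let ?U = "insert ?v (insert ?c U)" and ?\<phi> = "\<phi>(?c := s, ?v := y)"
    and ?Red = "insert {s, y} (insert {\<phi> ?x, s} Red)"
  have pQ: "p \<in> Q" and new: "?v \<notin> U" "?c \<notin> U" "?c \<noteq> ?v"
    using pending_pair[OF B] p by auto
  have agree: "\<forall>u\<in>U. ?\<phi> u = \<phi> u" using new by auto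
  have s': "s \<in> W - \<phi> ` U" "s \<notin> \<Union>(cand ` P2)" using s unfolding available_def by auto
  have y': "y \<in> W - \<phi> ` U" "{\<phi> (fst p), y} \<in> Red" "fst p \<in> U"
    using gadgets[OF B] p y by blast+
  have img: "?\<phi> ` ?U = insert y (insert s (\<phi> ` U))" using new by auto
  show ?thesis
    unfolding cross_bookkeeping_def
  proof (intro conjI)
    show "{} \<inter> (P2 - {p}) = {}" "{} \<union> (P2 - {p}) \<subseteq> Q" using pending_subset[OF B] by blast+
    show "\<forall>q\<in>Q - ({} \<union> (P2 - {p})). fst q \<in> ?U \<and> snd q \<in> ?U \<and> {?\<phi> (fst q), ?\<phi> (snd q)} \<in> ?Red"
    proof
      fix q assume q: "q \<in> Q - ({} \<union> (P2 - {p}))"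
      show "fst q \<in> ?U \<and> snd q \<in> ?U \<and> {?\<phi> (fst q), ?\<phi> (snd q)} \<in> ?Red"
      proof (cases "q = p")
        case True
        have "?\<phi> (fst p) = \<phi> (fst p)" using agree y'(3) by blast
        then show ?thesis using True y' by simp
      next
        case False
        then show ?thesis using q completed_pairs[OF B] agree by auto
      qed
    qed
    have U_eq: "?U = closing_vertices p \<union> U" unfolding closing_vertices_def by auto
    show "\<forall>q\<in>{} \<union> (P2 - {p}). closing_vertices q \<inter> ?U = {}"
    proof
      fix q assume q: "q \<in> {} \<union> (P2 - {p})"
      then have qQ: "q \<in> Q" "q \<noteq> p" using pending_subset[OF B] by auto
      have "closing_vertices q \<inter> U = {}" using pending_closing[OF B] q by blast
      moreover have "closing_vertices q \<inter> closing_vertices p = {}"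
        using closing_vertices_disjoint[OF qQ(1) pQ qQ(2)] .
      ultimately show "closing_vertices q \<inter> ?U = {}" unfolding U_eq by blast
    qed
    show "\<forall>q\<in>P2 - {p}. fst q \<in> ?U \<and> card (cand q) = 2 \<and> cand q \<subseteq> W - ?\<phi> ` ?U \<and>
        (\<forall>z\<in>cand q. {?\<phi> (fst q), z} \<in> ?Red)"
    proof
      fix q assume q: "q \<in> P2 - {p}"
      have "cand q \<inter> cand p = {}" using gadgets_disjoint[OF B] q p by blast
      then have "y \<notin> cand q" "s \<notin> cand q" using y s'(2) q by auto
      then show "fst q \<in> ?U \<and> card (cand q) = 2 \<and> cand q \<subseteq> W - ?\<phi> ` ?U \<and>
          (\<forall>z\<in>cand q. {?\<phi> (fst q), z} \<in> ?Red)"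
        using gadgets[OF B] q img agree by auto
    qed
    show "\<forall>q\<in>P2 - {p}. \<forall>q'\<in>P2 - {p}. q \<noteq> q' \<longrightarrow> cand q \<inter> cand q' = {}"
      using gadgets_disjoint[OF B] by blast
    show "\<forall>u\<in>?U. unused_nbrs ?U ?\<phi> ?Red u \<noteq> {} \<longrightarrow> u \<in> fst ` (Q - {})"
      by (rule red_to_unused_extend[OF B C _ agree]) (use img x s' y' in auto)
  qed
qed

lemma vertex_budgets_close:
  assumes S: "state U \<phi> {} P2 cand Red Blue"
    and p: "p \<in> P2" and x: "parent (parent (snd p)) \<in> U"
    and s: "s \<in> available U \<phi> P2 cand" "s' \<in> available U \<phi> P2 cand" "s \<noteq> s'"
    and y: "cand p = {y, y'}" "y \<noteq> y'"
  shows "\<forall>u\<in>insert (snd p) (insert (parent (snd p)) U).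
     vertex_budget (insert (snd p) (insert (parent (snd p)) U)) (\<phi>(parent (snd p) := s, snd p := y)) {}
       (insert {s, y} (insert {\<phi> (parent (parent (snd p))), s} Red))
       (insert {s, y'} (insert {\<phi> (parent (parent (snd p))), s'} Blue)) u"
proof
  let ?v = "snd p" let ?c = "parent ?v" let ?x = "parent ?c"
  let ?U = "insert ?v (insert ?c U)" and ?\<phi> = "\<phi>(?c := s, ?v := y)"
    and ?Red = "insert {s, y} (insert {\<phi> ?x, s} Red)"
    and ?Blue = "insert {s, y'} (insert {\<phi> ?x, s'} Blue)"
  have T: "tree_embedding U \<phi> Red" and C: "colouring_shape U \<phi> Red Blue"
    and B: "cross_bookkeeping U \<phi> {} P2 cand Red" and D: "\<forall>u\<in>U. vertex_budget U \<phi> {} Red Blue u"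
    using S unfolding state_def by blast+
  have vc: "?v \<in> V - U - R" "?c \<in> V - U - R" "?c \<noteq> ?v"
    using pending_pair[OF B] p by auto
  then have new: "?v \<notin> U" "?c \<notin> U" "?c \<noteq> ?v" by auto
  have agree: "\<forall>z\<in>U. ?\<phi> z = \<phi> z" using new by auto
  have img: "?\<phi> ` ?U = insert y (insert s (\<phi> ` U))" using new by auto
  have s': "s \<in> W - \<phi> ` U" "s' \<in> W - \<phi> ` U" "s \<notin> cand p" "s' \<notin> cand p"
    using s p unfolding available_def by auto
  have y': "y \<in> W - \<phi> ` U" "y' \<in> W - \<phi> ` U" using gadgets[OF B] p y by auto
  have xU: "\<phi> ?x \<in> \<phi> ` U" using x by blast
  have RU: "R \<subseteq> ?U" using roots_embedded[OF T] by blast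
  have c_child: "?c \<in> children U ?x" and v_child: "?v \<in> children U ?c"
    using vc new unfolding children_def by auto
  fix u assume u: "u \<in> ?U"
  consider (is_v) "u = ?v" | (is_c) "u = ?c" | (is_x) "u = ?x" | (other) "u \<in> U" "u \<noteq> ?x"
    using u by blast
  then show "vertex_budget ?U ?\<phi> {} ?Red ?Blue u"
  proof cases
    case is_v
    have "unused_nbrs ?U ?\<phi> (?Red \<union> ?Blue - (Red \<union> Blue)) ?v \<subseteq> {}"
      using s' y' y xU img new unfolding unused_nbrs_def by (auto simp: doubleton_eq_iff)
    then show ?thesis
      using is_v vc new y' agree RU card_children_le[of ?U ?v]
      by (intro vertex_budget_fresh[where N = "{}", OF C]) auto
  next
    case is_c
    have "unused_nbrs ?U ?\<phi> (?Red \<union> ?Blue - (Red \<union> Blue)) ?c \<subseteq> {y'}"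
      using s' y' y xU img new unfolding unused_nbrs_def by (auto simp: doubleton_eq_iff)
    moreover have "children ?U ?c \<subseteq> children (insert ?v U) ?c" by (rule children_anti) blast
    then have "card (children ?U ?c) \<le> card (children (insert ?v U) ?c)"
      by (rule card_mono[OF finite_children])
    then have "card {y'} + card (children ?U ?c) \<le> card {w \<in> V - R. parent w = ?c}"
      using card_children_insert[OF v_child] card_children_le[of U ?c] roots_embedded[OF T]
      by simp
    ultimately show ?thesis
      using is_c vc new s' agree by (intro vertex_budget_fresh[where N = "{y'}", OF C]) auto
  next
    case is_x
    have "\<forall>e\<in>(?Red - Red) \<union> (?Blue - Blue). \<phi> ?x \<in> e \<longrightarrow> e \<subseteq> insert s' (?\<phi> ` ?U)"
      using img xU s' y' by auto
    moreover have "insert ?c U \<subseteq> ?U" by blast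
    ultimately show ?thesis unfolding is_x
      by (intro vertex_budget_embed_child[OF D[rule_format, OF x] x c_child _ agree _ order_refl])
  next
    case other
    have "\<phi> u \<noteq> \<phi> ?x" using embedding_inj[OF T] other x by (meson inj_onD)
    moreover have "\<phi> u \<noteq> s" "\<phi> u \<noteq> s'" "\<phi> u \<noteq> y" "\<phi> u \<noteq> y'" using other s' y' by auto
    ultimately have new_edges: "\<forall>e\<in>(?Red - Red) \<union> (?Blue - Blue). \<phi> u \<notin> e" by auto
    have "U \<subseteq> ?U" by blast
    from vertex_budget_untouched[OF D[rule_format, OF other(1)] other(1) this agree new_edges order_refl]
    show ?thesis .
  qed
qed

lemma state_close:
  assumes S: "state U \<phi> {} P2 cand Red Blue"
    and p: "p \<in> P2" and x: "parent (parent (snd p)) \<in> U"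
    and s: "s \<in> available U \<phi> P2 cand" "s' \<in> available U \<phi> P2 cand" "s \<noteq> s'"
    and y: "cand p = {y, y'}" "y \<noteq> y'"
  shows "state (insert (snd p) (insert (parent (snd p)) U)) (\<phi>(parent (snd p) := s, snd p := y))
     {} (P2 - {p}) cand
     (insert {s, y} (insert {\<phi> (parent (parent (snd p))), s} Red))
     (insert {s, y'} (insert {\<phi> (parent (parent (snd p))), s'} Blue))"
proof -
  let ?v = "snd p" let ?c = "parent ?v" let ?x = "parent ?c"
  let ?U = "insert ?v (insert ?c U)" and ?\<phi> = "\<phi>(?c := s, ?v := y)"
    and ?Red = "insert {s, y} (insert {\<phi> ?x, s} Red)"
    and ?Blue = "insert {s, y'} (insert {\<phi> ?x, s'} Blue)"
  have T: "tree_embedding U \<phi> Red" and C: "colouring_shape U \<phi> Red Blue"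
    and B: "cross_bookkeeping U \<phi> {} P2 cand Red"
    using S unfolding state_def by blast+
  have vc: "?v \<in> V - U - R" "?c \<in> V - U - R" "?c \<noteq> ?v"
    using pending_pair[OF B] p by auto
  then have new: "?v \<notin> U" "?c \<notin> U" "?c \<noteq> ?v" by auto
  have s': "s \<in> W - \<phi> ` U" "s' \<in> W - \<phi> ` U" "s \<notin> cand p" "s' \<notin> cand p"
    using s p unfolding available_def by auto
  have y': "y \<in> W - \<phi> ` U" "y' \<in> W - \<phi> ` U" using gadgets[OF B] p y by auto
  have xW: "\<phi> ?x \<in> \<phi> ` U" "\<phi> ?x \<in> W" using x embedding_to_W[OF T] by auto
  have images: "?\<phi> ?x = \<phi> ?x" "?\<phi> ?c = s" using x new by auto
  have inner: "?x \<in> ?U - leaves V E R" "?c \<in> ?U - leaves V E R"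
    using x parent_not_leaf vc by auto
  have edges: "{\<phi> ?x, s} \<in> Kedges W" "{\<phi> ?x, s'} \<in> Kedges W" "{s, y} \<in> Kedges W" "{s, y'} \<in> Kedges W"
    using xW s' y' y by (auto intro!: doubleton_in_Kedges)
  have "tree_embedding (insert ?c U) (\<phi>(?c := s)) ?Red"
    by (rule tree_embedding_extend[OF T]) (use vc new x s' in \<open>auto simp: insert_commute\<close>)
  then have "tree_embedding ?U ?\<phi> ?Red"
    by (rule tree_embedding_extend) (use vc new y' s' y in \<open>auto simp: insert_commute\<close>)
  moreover have "?v \<notin> insert ?c U" using new by auto
  then have "colouring_shape ?U ?\<phi> Red Blue"
    by (rule colouring_shape_extend[OF colouring_shape_extend[OF C new(2)]])
  then have "colouring_shape ?U ?\<phi> (insert {\<phi> ?x, s} Red) (insert {\<phi> ?x, s'} Blue)"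
    by (rule colouring_shape_add_star[where T = "{s, s'}", OF _ inner(1)]) (use images edges in auto)
  then have "colouring_shape ?U ?\<phi> ?Red ?Blue"
    by (rule colouring_shape_add_star[where T = "{y, y'}", OF _ inner(2)]) (use images edges in auto)
  moreover have "cross_bookkeeping ?U ?\<phi> {} (P2 - {p}) cand ?Red"
    using cross_bookkeeping_close[OF B C p x s(1)] y by blast
  moreover have "\<forall>u\<in>?U. vertex_budget ?U ?\<phi> {} ?Red ?Blue u"
    using vertex_budgets_close[OF S p x s y] .
  ultimately show ?thesis unfolding state_def by blast
qed

lemma card_available:
  assumes S: "state U \<phi> P1 P2 cand Red Blue"
  shows "card (V - U) + maxdeg V E \<le> card (available U \<phi> P2 cand) + 2 * card P2"
proof -
  have T: "tree_embedding U \<phi> Red" and B: "cross_bookkeeping U \<phi> P1 P2 cand Red"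
    using S unfolding state_def by blast+
  have fin: "finite P2" "finite U" using pending_subset[OF B] finite_Q embedded_subset[OF T] finite_V
    by (auto intro: finite_subset)
  have "card (\<Union>(cand ` P2)) \<le> (\<Sum>p\<in>P2. card (cand p))" using card_UN_le[OF fin(1)] .
  also have "\<dots> = 2 * card P2" using gadgets[OF B] by simp
  finally have reserved: "card (\<Union>(cand ` P2)) \<le> 2 * card P2" .
  have "W \<subseteq> available U \<phi> P2 cand \<union> \<phi> ` U \<union> \<Union>(cand ` P2)" unfolding available_def by blast
  then have "card W \<le> card (available U \<phi> P2 cand \<union> \<phi> ` U \<union> \<Union>(cand ` P2))"
    using finite_W gadgets[OF B] fin by (intro card_mono) (auto simp: available_def card_ge_0_finite)
  also have "\<dots> \<le> card (available U \<phi> P2 cand) + card (\<phi> ` U) + card (\<Union>(cand ` P2))"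
    by (meson add_le_mono card_Un_le le_refl order_trans)
  also have "card (\<phi> ` U) \<le> card U" using card_image_le[OF fin(2)] .
  finally have "card W \<le> card (available U \<phi> P2 cand) + card U + 2 * card P2" using reserved by linarith
  moreover have "card V = card U + card (V - U)"
    using card_Diff_subset[OF fin(2) embedded_subset[OF T]] card_mono[OF finite_V embedded_subset[OF T]]
    by simp
  ultimately show ?thesis using card_W by linarith
qed

lemma card_closing_le:
  assumes S: "state U \<phi> P1 P2 cand Red Blue"
    and P: "P \<subseteq> P1 \<union> P2" and X: "X \<subseteq> V - U" "X \<inter> \<Union>(closing_vertices ` P) = {}"
  shows "2 * card P + card X \<le> card (V - U)"
proof -
  have B: "cross_bookkeeping U \<phi> P1 P2 cand Red" using S unfolding state_def by blast
  have PQ: "P \<subseteq> Q" using P pending_subset[OF B] by blast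
  have sub: "\<Union>(closing_vertices ` P) \<subseteq> V - U"
    using pending_closing[OF B] closing_vertices_in_V PQ P by blast
  have fin: "finite (\<Union>(closing_vertices ` P))" "finite X"
    using sub X(1) finite_V by (auto intro: finite_subset)
  have "2 * card P + card X = card (\<Union>(closing_vertices ` P) \<union> X)"
    using card_Union_closing_vertices[OF PQ] card_Un_disjoint[OF fin] X(2) by (simp add: Int_commute)
  also have "\<dots> \<le> card (V - U)" using sub X(1) finite_V by (intro card_mono) auto
  finally show ?thesis .
qed

lemma card_available_le:
  "card (available U \<phi> P2 cand)
     \<le> card {s \<in> available U \<phi> P2 cand. {\<phi> x, s} \<notin> C} + card (unused_nbrs U \<phi> C x)"
proof -
  have "available U \<phi> P2 cand
      \<subseteq> {s \<in> available U \<phi> P2 cand. {\<phi> x, s} \<notin> C} \<union> unused_nbrs U \<phi> C x"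
    unfolding available_def unused_nbrs_def by blast
  then have "card (available U \<phi> P2 cand)
      \<le> card ({s \<in> available U \<phi> P2 cand. {\<phi> x, s} \<notin> C} \<union> unused_nbrs U \<phi> C x)"
    using finite_W finite_unused_nbrs by (intro card_mono) (auto simp: available_def)
  also have "\<dots> \<le> card {s \<in> available U \<phi> P2 cand. {\<phi> x, s} \<notin> C} + card (unused_nbrs U \<phi> C x)"
    by (rule card_Un_le)
  finally show ?thesis .
qed

lemma two_free_edges:
  assumes S: "state U \<phi> P1 P2 cand Red Blue" and x: "x \<in> U" "children U x \<noteq> {}"
    and room: "2 * card P2 + (if x \<in> R then 1 else 0) \<le> card (V - U)"
  shows "2 \<le> card {s \<in> available U \<phi> P2 cand. {\<phi> x, s} \<notin> Red \<union> Blue}"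
proof -
  have "card (unused_nbrs U \<phi> (Red \<union> Blue) x) + card (children U x) + (if x \<in> R then 0 else 1)
      \<le> maxdeg V E"
    using S x unfolding state_def vertex_budget_def by blast
  moreover have "1 \<le> card (children U x)" using x(2) finite_children by (simp add: Suc_le_eq card_gt_0_iff)
  ultimately show ?thesis
    using card_available[OF S] card_available_le[of U \<phi> P2 cand x "Red \<union> Blue"] room
    by (auto split: if_splits)
qed

lemma gadget_room:
  assumes S: "state U \<phi> P1 P2 cand Red Blue" and p: "p \<in> P1" "fst p \<in> U"
  shows "card (unused_nbrs U \<phi> (Red \<union> Blue) (fst p)) + 2 \<le> maxdeg V E"
    and "maxdeg V E + 2 \<le> card (available U \<phi> P2 cand)"
proof -
  let ?g = "fst p"
  have B: "cross_bookkeeping U \<phi> P1 P2 cand Red" using S unfolding state_def by blast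
  have pQ: "p \<in> Q" "p \<notin> P2" using p pending_subset[OF B] pending_disjoint[OF B] by blast+
  have "unused_nbrs U \<phi> Red ?g = {}"
  proof (rule ccontr)
    assume "unused_nbrs U \<phi> Red ?g \<noteq> {}"
    then have "?g \<in> fst ` (Q - P1)" using red_to_unused[OF B] p(2) by blast
    then obtain q where "?g = fst q" "q \<in> Q - P1" by (elim imageE)
    then show False using pair_fst_inj[of q p] pQ p(1) by auto
  qed
  then have "unused_nbrs U \<phi> (Red \<union> Blue) ?g = unused_nbrs U \<phi> Blue ?g"
    unfolding unused_nbrs_def by auto
  moreover have "vertex_budget U \<phi> P1 Red Blue ?g" using S p(2) unfolding state_def by blast
  then have "card (unused_nbrs U \<phi> Blue ?g) + 2 \<le> maxdeg V E"
    using p(1) pair_fst_not_leaf[OF pQ(1)] unfolding vertex_budget_def by auto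
  ultimately show "card (unused_nbrs U \<phi> (Red \<union> Blue) ?g) + 2 \<le> maxdeg V E" by simp
  have "2 * card (insert p P2) \<le> card (V - U)"
    using card_closing_le[OF S, of "insert p P2" "{}"] p(1) by auto
  moreover have "card (insert p P2) = Suc (card P2)"
    using pQ pending_subset[OF B] finite_Q finite_subset by (metis card_insert_disjoint Un_subset_iff)
  ultimately show "maxdeg V E + 2 \<le> card (available U \<phi> P2 cand)"
    using card_available[OF S] by simp
qed

lemma grow_move:
  assumes S: "state U \<phi> P1 P2 cand Red Blue" and x: "x \<in> U" and w: "w \<in> children U x"
    and w_free: "w \<notin> \<Union>(closing_vertices ` (P1 \<union> P2))"
    and next_state: "\<And>\<phi>' Red' Blue'. state (insert w U) \<phi>' P1 P2 cand Red' Blue'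
      \<Longrightarrow> waiter_forces W P k Red' Blue'"
  shows "waiter_forces W P (Suc k) Red Blue"
proof -
  have T: "tree_embedding U \<phi> Red" using S unfolding state_def by blast
  have "{w} \<subseteq> V - U" "{w} \<inter> \<Union>(closing_vertices ` P2) = {}"
    using w w_free unfolding children_def by auto
  then have "2 * card P2 + card {w} \<le> card (V - U)"
    by (rule card_closing_le[OF S, of P2, OF Un_upper2])
  then have "2 * card P2 + (if x \<in> R then 1 else 0) \<le> card (V - U)" by simp
  then have "2 \<le> card {s \<in> available U \<phi> P2 cand. {\<phi> x, s} \<notin> Red \<union> Blue}"
    using two_free_edges[OF S x] w by blast
  then show ?thesis
  proof (rule waiter_forces_offer_star)
    show "available U \<phi> P2 cand \<subseteq> W" "\<phi> x \<in> W" "\<phi> x \<notin> available U \<phi> P2 cand"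
      using x embedding_to_W[OF T] unfolding available_def by auto
    fix s s' assume "s \<in> available U \<phi> P2 cand" "s' \<in> available U \<phi> P2 cand" "s \<noteq> s'"
    from state_grow[OF S x w w_free this]
    show "waiter_forces W P k (insert {\<phi> x, s} Red) (insert {\<phi> x, s'} Blue)"
      by (rule next_state)
  qed
qed

lemma gadget_move:
  assumes S: "state U \<phi> P1 P2 cand Red Blue"
    and p: "p \<in> P1" "fst p \<in> U" "children U (fst p) = {}"
    and next_state: "\<And>cand' Red' Blue'. state U \<phi> (P1 - {p}) (insert p P2) cand' Red' Blue'
      \<Longrightarrow> waiter_forces W P k Red' Blue'"
  shows "waiter_forces W P (Suc (Suc k)) Red Blue"
proof -
  let ?g = "fst p" and ?A = "available U \<phi> P2 cand"
  have T: "tree_embedding U \<phi> Red" using S unfolding state_def by blast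
  note budget = gadget_room(1)[OF S p(1,2)] and room = gadget_room(2)[OF S p(1,2)]
  have A: "?A \<subseteq> W" "\<phi> ?g \<in> W" "\<phi> ?g \<notin> ?A"
    using p embedding_to_W[OF T] unfolding available_def by auto
  have "2 \<le> card {s \<in> ?A. {\<phi> ?g, s} \<notin> Red \<union> Blue}"
    using budget room card_available_le[of U \<phi> P2 cand ?g "Red \<union> Blue"] by linarith
  then show ?thesis
  proof (rule waiter_forces_offer_star[OF _ A])
    fix y1 z1 assume y1: "y1 \<in> ?A" "z1 \<in> ?A" "y1 \<noteq> z1"
    let ?Red = "insert {\<phi> ?g, y1} Red" and ?Blue = "insert {\<phi> ?g, z1} Blue"
    have sub: "unused_nbrs U \<phi> (?Red \<union> ?Blue) ?g
        \<subseteq> insert y1 (insert z1 (unused_nbrs U \<phi> (Red \<union> Blue) ?g))"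
      unfolding unused_nbrs_def by (auto simp: doubleton_eq_iff)
    have "card (unused_nbrs U \<phi> (?Red \<union> ?Blue) ?g)
        \<le> card (insert y1 (insert z1 (unused_nbrs U \<phi> (Red \<union> Blue) ?g)))"
      using card_mono[OF _ sub] finite_unused_nbrs by simp
    also have "\<dots> \<le> card (unused_nbrs U \<phi> (Red \<union> Blue) ?g) + 2"
      using finite_unused_nbrs by (simp add: card_insert_if)
    finally have "2 \<le> card {s \<in> ?A. {\<phi> ?g, s} \<notin> ?Red \<union> ?Blue}"
      using budget room card_available_le[of U \<phi> P2 cand ?g "?Red \<union> ?Blue"] by linarith
    then show "waiter_forces W P (Suc k) ?Red ?Blue"
    proof (rule waiter_forces_offer_star[OF _ A])
      fix y2 z2 assume y2: "y2 \<in> ?A" "z2 \<in> ?A" "y2 \<noteq> z2" "{\<phi> ?g, y2} \<notin> ?Red \<union> ?Blue"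
      then have "y1 \<noteq> y2" by auto
      moreover have "z1 \<in> W - \<phi> ` U" "z2 \<in> W - \<phi> ` U" using y1 y2 unfolding available_def by auto
      ultimately have "state U \<phi> (P1 - {p}) (insert p P2) (cand(p := {y1, y2}))
          (insert {\<phi> ?g, y2} ?Red) (insert {\<phi> ?g, z2} ?Blue)"
        using state_gadget[OF S p y1(1) y2(1)] by blast
      then show "waiter_forces W P k (insert {\<phi> ?g, y2} ?Red) (insert {\<phi> ?g, z2} ?Blue)"
        by (rule next_state)
    qed
  qed
qed

lemma close_move:
  assumes S: "state U \<phi> {} P2 cand Red Blue" and p: "p \<in> P2" and x: "parent (parent (snd p)) \<in> U"
    and next_state: "\<And>\<phi>' Red' Blue'.
      state (insert (snd p) (insert (parent (snd p)) U)) \<phi>' {} (P2 - {p}) cand Red' Blue'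
      \<Longrightarrow> waiter_forces W P k Red' Blue'"
  shows "waiter_forces W P (Suc (Suc k)) Red Blue"
proof -
  let ?c = "parent (snd p)" and ?x = "parent (parent (snd p))" and ?A = "available U \<phi> P2 cand"
  have T: "tree_embedding U \<phi> Red" and C: "colouring_shape U \<phi> Red Blue"
    and B: "cross_bookkeeping U \<phi> {} P2 cand Red"
    using S unfolding state_def by blast+
  have "card (cand p) = 2" using gadgets[OF B] p by blast
  then obtain y y' where y: "cand p = {y, y'}" "y \<noteq> y'" unfolding card_2_iff by blast
  have "?c \<in> children U ?x" using pending_pair(3)[OF B] p unfolding children_def by auto
  moreover have "2 * card P2 + (if ?x \<in> R then 1 else 0) \<le> card (V - U)"
    using card_closing_le[OF S, of P2 "{}"] pending_pair(5)[OF B] p by auto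
  ultimately have "2 \<le> card {s \<in> ?A. {\<phi> ?x, s} \<notin> Red \<union> Blue}"
    using two_free_edges[OF S x] by blast
  moreover have "?A \<subseteq> W" "\<phi> ?x \<in> W" "\<phi> ?x \<notin> ?A"
    using x embedding_to_W[OF T] unfolding available_def by auto
  ultimately show ?thesis
  proof (rule waiter_forces_offer_star)
    fix s s' assume s: "s \<in> ?A" "s' \<in> ?A" "s \<noteq> s'"
    let ?Red = "insert {\<phi> ?x, s} Red" and ?Blue = "insert {\<phi> ?x, s'} Blue"
    have fresh: "s \<in> W - \<phi> ` U" "s \<notin> cand p" "y \<in> W - \<phi> ` U" "y' \<in> W - \<phi> ` U"
      using s p gadgets[OF B] y unfolding available_def by auto
    have "\<phi> ?x \<in> \<phi> ` U" using x by blast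
    then have uncoloured: "{s, t} \<notin> ?Red \<union> ?Blue" if "t \<in> cand p" for t
      using fresh_pair_uncoloured[OF C, of s t] fresh that y s(3) by (auto simp: doubleton_eq_iff)
    have edges: "{s, t} \<in> Kedges W" if "t \<in> cand p" for t
      using fresh that y by (auto intro!: doubleton_in_Kedges)
    have y_swap: "cand p = {y', y}" "y' \<noteq> y" using y by auto
    show "waiter_forces W P (Suc k) ?Red ?Blue"
    proof (rule waiter_forces_offer)
      show "{s, y} \<in> Kedges W - (?Red \<union> ?Blue)" "{s, y'} \<in> Kedges W - (?Red \<union> ?Blue)"
        using uncoloured edges y(1) by blast+
      show "{s, y} \<noteq> {s, y'}" using y(2) by (auto simp: doubleton_eq_iff)
      show "waiter_forces W P k (insert {s, y} ?Red) (insert {s, y'} ?Blue)"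
        using state_close[OF S p x s y] by (rule next_state)
      show "waiter_forces W P k (insert {s, y'} ?Red) (insert {s, y} ?Blue)"
        using state_close[OF S p x s y_swap] by (rule next_state)
    qed
  qed
qed

lemma initial_state: "state R \<rho>0 Q {} cand {} {}"
proof -
  have "tree_embedding R \<rho>0 {}"
    unfolding tree_embedding_def using roots_subset inj_roots roots_to_W by blast
  moreover have "colouring_shape R \<rho>0 {} {}" unfolding colouring_shape_def by simp
  moreover have "cross_bookkeeping R \<rho>0 Q {} cand {}"
    unfolding cross_bookkeeping_def closing_vertices_def unused_nbrs_def using pair_vertices by auto
  moreover have "vertex_budget R \<rho>0 Q {} {} x" if "x \<in> R" for x
  proof -
    have "x \<notin> fst ` Q" using pair_vertices(1) that by blast
    moreover have "card (children R x) \<le> maxdeg V E"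
      using degree_bound[of x] card_children_le[of R x] that roots_subset by force
    ultimately show ?thesis using that unfolding vertex_budget_def unused_nbrs_def by simp
  qed
  ultimately show ?thesis unfolding state_def by blast
qed

lemma good_copy_final:
  assumes S: "state V \<phi> {} P2 cand Red Blue"
  shows "good_copy V E R W \<rho>0 Red Blue"
proof -
  have T: "tree_embedding V \<phi> Red" and C: "colouring_shape V \<phi> Red Blue"
    and B: "cross_bookkeeping V \<phi> {} P2 cand Red" and D: "\<forall>x\<in>V. vertex_budget V \<phi> {} Red Blue x"
    using S unfolding state_def by blast+
  have "P2 = {}"
  proof (rule ccontr)
    assume "P2 \<noteq> {}"
    then obtain p where "p \<in> P2" by blast
    then have "closing_vertices p \<inter> V = {}" "closing_vertices p \<subseteq> V"
      using pending_closing[OF B] closing_vertices_in_V pending_subset[OF B] by blast+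
    then show False unfolding closing_vertices_def by blast
  qed
  show ?thesis
    unfolding good_copy_def
  proof (intro exI[of _ \<phi>] conjI)
    show "inj_on \<phi> V" "\<phi> ` V \<subseteq> W" "\<forall>r\<in>R. \<phi> r = \<rho>0 r"
      using tree_embeddingD[OF T] by blast+
    show "\<forall>u v. {u, v} \<in> E \<longrightarrow> {\<phi> u, \<phi> v} \<in> Red"
    proof (intro allI impI)
      fix u v assume e: "{u, v} \<in> E"
      from edge_cases[OF e] show "{\<phi> u, \<phi> v} \<in> Red"
      proof
        assume "\<exists>w\<in>V - R. {u, v} = {w, parent w}"
        then obtain w where w: "w \<in> V - R" "{u, v} = {w, parent w}" by blast
        then have "{\<phi> w, \<phi> (parent w)} \<in> Red" using parent_embedded[OF T] by blast
        then show ?thesis using w(2) by (auto simp: doubleton_eq_iff insert_commute)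
      next
        assume "\<exists>q\<in>Q. {u, v} = {fst q, snd q}"
        then obtain q where q: "q \<in> Q" "{u, v} = {fst q, snd q}" by blast
        then have "{\<phi> (fst q), \<phi> (snd q)} \<in> Red" using completed_pairs[OF B] \<open>P2 = {}\<close> by auto
        then show ?thesis using q(2) by (auto simp: doubleton_eq_iff insert_commute)
      qed
    qed
    show "\<forall>e\<in>Red \<union> Blue. \<exists>x\<in>e. x \<in> \<phi> ` (V - leaves V E R)"
      using coloured_at_inner[OF C] by blast
    show "\<forall>x\<in>V - leaves V E R. card {y \<in> W - \<phi> ` V. {\<phi> x, y} \<in> Blue} \<le> maxdeg V E"
    proof
      fix x assume "x \<in> V - leaves V E R"
      then have "card (unused_nbrs V \<phi> Blue x) + card (children V x) \<le> maxdeg V E"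
        using D unfolding vertex_budget_def by auto
      then show "card {y \<in> W - \<phi> ` V. {\<phi> x, y} \<in> Blue} \<le> maxdeg V E"
        unfolding unused_nbrs_def by linarith
    qed
  qed
qed

lemma strategy_step_gadget_pending:
  assumes S: "state U \<phi> P1 P2 cand Red Blue" and p: "p \<in> P1"
    and IH: "\<And>U' \<phi>' P1' P2' cand' Red' Blue'.
      card (V - U') + 2 * card P1' < card (V - U) + 2 * card P1 \<Longrightarrow>
      state U' \<phi>' P1' P2' cand' Red' Blue' \<Longrightarrow>
      waiter_forces W P (card (V - U') + 2 * card P1') Red' Blue'"
  shows "waiter_forces W P (card (V - U) + 2 * card P1) Red Blue"
proof -
  have T: "tree_embedding U \<phi> Red" and B: "cross_bookkeeping U \<phi> P1 P2 cand Red"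
    using S unfolding state_def by blast+
  have pQ: "p \<in> Q" using p pending_subset[OF B] by blast
  consider (gadget) "fst p \<in> U" "children U (fst p) = {}"
    | (grow) w where "w \<in> V - U" "parent w \<in> U" "root_of w = root_of (fst p)"
  proof (cases "fst p \<in> U \<and> children U (fst p) = {}")
    case False
    show ?thesis
    proof (cases "fst p \<in> U")
      case True
      then obtain w where "w \<in> children U (fst p)" using False by blast
      then have w: "w \<in> V - U" "w \<in> V - R" "parent w = fst p"
        using roots_embedded[OF T] unfolding children_def by auto
      show ?thesis by (rule that(2)[of w]) (use w True root_of_parent[OF w(2)] in auto)
    next
      case False
      then show ?thesis
        using frontier_vertex[OF roots_embedded[OF T], of "fst p"] pair_vertices(1)[OF pQ] that(2)
        by blast
    qed
  qed blast
  then show ?thesis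
  proof cases
    case gadget
    have "card P1 = Suc (card (P1 - {p}))"
      using p pending_subset[OF B] finite_Q by (meson card.remove finite_subset le_sup_iff)
    then have m: "card (V - U) + 2 * card P1 = Suc (Suc (card (V - U) + 2 * card (P1 - {p})))"
      by simp
    show ?thesis unfolding m
      by (rule gadget_move[OF S p gadget]) (rule IH; use m in simp)
  next
    case (grow w)
    have w: "w \<in> children U (parent w)" using grow unfolding children_def by blast
    have w_free: "w \<notin> \<Union>(closing_vertices ` (P1 \<union> P2))"
      using closing_vertex_not_in_tree_of_fst[OF pQ] pending_subset[OF B] grow by blast
    have m: "card (V - U) + 2 * card P1 = Suc (card (V - insert w U) + 2 * card P1)"
      using card_unembedded_insert[OF grow(1)] by simp
    show ?thesis unfolding m
      by (rule grow_move[OF S grow(2) w w_free]) (rule IH; use m in simp)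
  qed
qed

lemma strategy_step_no_gadget_pending:
  assumes S: "state U \<phi> {} P2 cand Red Blue" and w0: "w0 \<in> V - U"
    and IH: "\<And>U' \<phi>' P2' cand' Red' Blue'. card (V - U') < card (V - U) \<Longrightarrow>
      state U' \<phi>' {} P2' cand' Red' Blue' \<Longrightarrow> waiter_forces W P (card (V - U')) Red' Blue'"
  shows "waiter_forces W P (card (V - U)) Red Blue"
proof -
  have T: "tree_embedding U \<phi> Red" and B: "cross_bookkeeping U \<phi> {} P2 cand Red"
    using S unfolding state_def by blast+
  obtain w where w: "w \<in> V - U" "parent w \<in> U"
    using frontier_vertex[OF roots_embedded[OF T] w0] by blast
  show ?thesis
  proof (cases "\<exists>p\<in>P2. w = parent (snd p)")
    case True
    then obtain p where p: "p \<in> P2" "w = parent (snd p)" by blast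
    moreover have "snd p \<in> V - U" "parent (snd p) \<noteq> snd p"
      using pending_pair(2,4)[OF B] p(1) by auto
    ultimately have "snd p \<in> V - insert w U" by auto
    then have m: "card (V - U) = Suc (Suc (card (V - insert (snd p) (insert (parent (snd p)) U))))"
      using card_unembedded_insert[OF w(1)] card_unembedded_insert[of "snd p" "insert w U"] p(2)
      by simp
    show ?thesis unfolding m
    proof (rule close_move[OF S p(1)])
      show "parent (parent (snd p)) \<in> U" using w p by simp
      fix \<phi>' Red' Blue'
      assume "state (insert (snd p) (insert (parent (snd p)) U)) \<phi>' {} (P2 - {p}) cand Red' Blue'"
      then show "waiter_forces W P (card (V - insert (snd p) (insert (parent (snd p)) U))) Red' Blue'"
        by (rule IH[rotated]) (use m in simp)
    qed
  next
    case False
    have "w \<noteq> snd q" if "q \<in> P2" for q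
      using pending_closing[OF B] that w(2) unfolding closing_vertices_def by blast
    then have w_free: "w \<notin> \<Union>(closing_vertices ` ({} \<union> P2))"
      using False unfolding closing_vertices_def by blast
    have "w \<in> children U (parent w)" using w unfolding children_def by blast
    then show ?thesis unfolding card_unembedded_insert[OF w(1)]
      by (rule grow_move[OF S w(2) _ w_free]) (rule IH; simp add: card_unembedded_insert[OF w(1)])
  qed
qed

text \<open>Every move costs as many rounds as it decreases \<open>card (V - U) + 2 * card P1\<close>.\<close>

lemma strategy:
  "state U \<phi> P1 P2 cand Red Blue \<Longrightarrow>
     waiter_forces W (good_copy V E R W \<rho>0) (card (V - U) + 2 * card P1) Red Blue"
proof (induction "card (V - U) + 2 * card P1" arbitrary: U \<phi> P1 P2 cand Red Blue rule: less_induct)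
  case less
  show ?case
  proof (cases "P1 = {}")
    case False
    then obtain p where "p \<in> P1" by blast
    then show ?thesis using strategy_step_gadget_pending[OF less.prems] less.hyps by blast
  next
    case True
    show ?thesis
    proof (cases "U = V")
      case True
      then show ?thesis
        using good_copy_final waiter_forces_done less.prems \<open>P1 = {}\<close> by blast
    next
      case False
      then obtain w0 where w0: "w0 \<in> V - U"
        using embedded_subset less.prems unfolding state_def by blast
      have S: "state U \<phi> {} P2 cand Red Blue" using less.prems \<open>P1 = {}\<close> by simp
      have "waiter_forces W (good_copy V E R W \<rho>0) (card (V - U)) Red Blue"
      proof (rule strategy_step_no_gadget_pending[OF S w0])
        fix U' \<phi>' P2' cand' Red' Blue'
        assume "card (V - U') < card (V - U)" "state U' \<phi>' {} P2' cand' Red' Blue'"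
        then show "waiter_forces W (good_copy V E R W \<rho>0) (card (V - U')) Red' Blue'"
          using less.hyps[of U' "{}"] \<open>P1 = {}\<close> by simp
      qed
      then show ?thesis using \<open>P1 = {}\<close> by simp
    qed
  qed
qed

theorem waiter_wins: "waiter_forces W (good_copy V E R W \<rho>0) (card (V - R) + 2 * card Q) {} {}"
  using strategy[OF initial_state] .

end

theorem lemma3p22:
  fixes V :: "'a set" and E :: "'a set set" and R :: "'a set"
    and W :: "'b set" and \<rho> :: "'a \<Rightarrow> 'b"
  assumes "forest V E"
    and "R \<subseteq> V"
    and "\<forall>C\<in>components V E. card (C \<inter> R) = 1 \<or> card (C \<inter> R) = 2"
    and "\<forall>C\<in>double_rooted_comps V E R. \<forall>r1\<in>C \<inter> R. \<forall>r2\<in>C \<inter> R.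
           r1 \<noteq> r2 \<longrightarrow> dist_ge E r1 r2 7"
    and "finite W"
    and "card W \<ge> card V + maxdeg V E"
    and "inj_on \<rho> R" and "\<rho> ` R \<subseteq> W"
  shows "waiter_forces W (good_copy V E R W \<rho>)
           (card E + card (double_rooted_comps V E R)) {} {}"
proof -
  have "\<forall>C\<in>components V E. C \<inter> R \<noteq> {} \<and> card (C \<inter> R) \<le> 2"
    using assms(3) by fastforce
  then interpret far_rooted_forest V E R
    using assms(1,2,4) by unfold_locales blast+
  have "\<forall>e\<in>cross_edges. card e = 2" using edge_subset unfolding cross_edges_def by blast
  then obtain Q where Q: "bij_betw (\<lambda>(g, v). {g, v}) Q cross_edges"
    using exists_orientation by blast
  interpret waiter_strategy V E R W \<rho> Q
    using assms(5-8) Q by unfold_locales auto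
  have "card (V - R) + 2 * card Q \<le> card E + card (double_rooted_comps V E R)"
    using bij_betw_same_card[OF Q] card_E card_cross_edges_le by linarith
  then show ?thesis using waiter_wins waiter_forces_mono by blast
qed

end
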